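(* Let $\varphi:\Lambda\to\Gamma$ be a regular covering map of finite simplicial graphs without isolated vertices. Then the sequences $$1\to\mathrm{FD}(\varphi)\to\mathrm{FAut}(\varphi)\to\mathrm{LAut}(\varphi)\to1$$ and $$1\to\mathrm{Deck}(\varphi)\to\mathrm{FAut}(\varphi)/(\mathrm{FAut}(\varphi)\cap\mathrm{IA}(A_\Lambda))\to\mathrm{LAut}(\varphi)/(\mathrm{LAut}(\varphi)\cap\mathrm{IA}(A_\Gamma))\to1$$ are exact, where the map $\mathrm{FAut}(\varphi)\to\mathrm{LAut}(\varphi)$ sends a lift $F$ to the automorphism $f$ it lifts, the second sequence has the maps induced by inclusion of $\mathrm{Deck}(\varphi)$ and by $F\mapsto f$.
   Context: Graphs are finite simplicial graphs; $A_\Gamma$ is the right-angled Artin group with generators $V\Gamma$ and relations $[u,v]=1$ for edges $\{u,v\}$. A covering map of graphs $\varphi:\Lambda\to\Gamma$ is a surjective simplicial map that maps the neighbours of each vertex $u$ bijectively onto the neighbours of $\varphi(u)$; $\mathrm{Deck}(\varphi)$ is the group of graph automorphisms $\mu$ of $\Lambda$ with $\varphi\mu=\varphi$, regarded as a subgroup of $\mathrm{Aut}(A_\Lambda)$; $\varphi$ is regular if $\mathrm{Deck}(\varphi)$ acts transitively on each fiber. Let $\phi:A_\Lambda\to A_\Gamma$ be induced by $\varphi$. $f\in\mathrm{Aut}(A_\Gamma)$ is liftable if there is $F\in\mathrm{Aut}(A_\Lambda)$ (a lift) with $f\circ\phi=\phi\circ F$ (since $\phi$ is surjective, $F$ determines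 $f$). $\mathrm{LAut}(\varphi)$ is the group of liftable automorphisms, $\mathrm{FAut}(\varphi)\le\mathrm{Aut}(A_\Lambda)$ the group of all lifts of liftable automorphisms, and $\mathrm{FD}(\varphi)$ the group of lifts of the identity. $\mathrm{IA}(A)$ denotes the kernel of the action of $\mathrm{Aut}(A)$ on $H_1(A)$. *)

theory Defs
  imports "HOL-Algebra.Algebra"
begin

definition simple_graph :: "'v set \<Rightarrow> ('v \<Rightarrow> 'v \<Rightarrow> bool) \<Rightarrow> bool" where
  "simple_graph V E \<longleftrightarrow> finite V \<and> (\<forall>u v. E u v \<longrightarrow> u \<in> V \<and> v \<in> V \<and> u \<noteq> v \<and> E v u)"

definition no_isolated_vertices :: "'v set \<Rightarrow> ('v \<Rightarrow> 'v \<Rightarrow> bool) \<Rightarrow> bool" where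
  "no_isolated_vertices V E \<longleftrightarrow> (\<forall>v\<in>V. \<exists>u. E v u)"

definition neighbours :: "('v \<Rightarrow> 'v \<Rightarrow> bool) \<Rightarrow> 'v \<Rightarrow> 'v set" where
  "neighbours E u = {x. E u x}"

definition covering_map ::
  "'w set \<Rightarrow> ('w \<Rightarrow> 'w \<Rightarrow> bool) \<Rightarrow> 'v set \<Rightarrow> ('v \<Rightarrow> 'v \<Rightarrow> bool) \<Rightarrow> ('w \<Rightarrow> 'v) \<Rightarrow> bool" where
  "covering_map VL EL VG EG \<phi> \<longleftrightarrow>
     \<phi> ` VL = VG \<and>
     (\<forall>u v. EL u v \<longrightarrow> EG (\<phi> u) (\<phi> v)) \<and>
     (\<forall>u\<in>VL. bij_betw \<phi> (neighbours EL u) (neighbours EG (\<phi> u)))"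

definition graph_aut :: "'w set \<Rightarrow> ('w \<Rightarrow> 'w \<Rightarrow> bool) \<Rightarrow> ('w \<Rightarrow> 'w) \<Rightarrow> bool" where
  "graph_aut V E \<mu> \<longleftrightarrow> bij_betw \<mu> V V \<and> (\<forall>u\<in>V. \<forall>v\<in>V. E (\<mu> u) (\<mu> v) \<longleftrightarrow> E u v)"

definition deck_graph ::
  "'w set \<Rightarrow> ('w \<Rightarrow> 'w \<Rightarrow> bool) \<Rightarrow> ('w \<Rightarrow> 'v) \<Rightarrow> ('w \<Rightarrow> 'w) set" where
  "deck_graph VL EL \<phi> = {\<mu>. graph_aut VL EL \<mu> \<and> (\<forall>u\<in>VL. \<phi> (\<mu> u) = \<phi> u)}"

definition regular_covering ::
  "'w set \<Rightarrow> ('w \<Rightarrow> 'w \<Rightarrow> bool) \<Rightarrow> 'v set \<Rightarrow> ('v \<Rightarrow> 'v \<Rightarrow> bool) \<Rightarrow> ('w \<Rightarrow> 'v) \<Rightarrow> bool" where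
  "regular_covering VL EL VG EG \<phi> \<longleftrightarrow> covering_map VL EL VG EG \<phi> \<and>
     (\<forall>u\<in>VL. \<forall>u'\<in>VL. \<phi> u = \<phi> u' \<longrightarrow> (\<exists>\<mu>\<in>deck_graph VL EL \<phi>. \<mu> u = u'))"

text \<open>Words are lists of letters (v, True) = v and (v, False) = v^-1.\<close>

definition raag_words :: "'v set \<Rightarrow> ('v \<times> bool) list set" where
  "raag_words V = {w. set w \<subseteq> V \<times> UNIV}"

definition raag_step ::
  "'v set \<Rightarrow> ('v \<Rightarrow> 'v \<Rightarrow> bool) \<Rightarrow> ('v \<times> bool) list \<Rightarrow> ('v \<times> bool) list \<Rightarrow> bool" where
  "raag_step V E x y \<longleftrightarrow> x \<in> raag_words V \<and> y \<in> raag_words V \<and>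
     ((\<exists>a b v c. x = a @ [(v, c), (v, \<not> c)] @ b \<and> y = a @ b) \<or>
      (\<exists>a b u v c d. E u v \<and> x = a @ [(u, c), (v, d)] @ b \<and> y = a @ [(v, d), (u, c)] @ b))"

definition raag_rel :: "'v set \<Rightarrow> ('v \<Rightarrow> 'v \<Rightarrow> bool) \<Rightarrow> (('v \<times> bool) list \<times> ('v \<times> bool) list) set" where
  "raag_rel V E = {(x, y). x \<in> raag_words V \<and> y \<in> raag_words V \<and> equivclp (raag_step V E) x y}"

definition raag :: "'v set \<Rightarrow> ('v \<Rightarrow> 'v \<Rightarrow> bool) \<Rightarrow> ('v \<times> bool) list set monoid" where
  "raag V E = \<lparr> carrier = (raag_words V // raag_rel V E),
                monoid.mult = (\<lambda>P Q. (\<Union>x\<in>P. (\<Union>y\<in>Q. raag_rel V E `` {x @ y}))),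
                one = (raag_rel V E `` {[]}) \<rparr>"

definition raag_hom ::
  "'w set \<Rightarrow> ('w \<Rightarrow> 'w \<Rightarrow> bool) \<Rightarrow> 'v set \<Rightarrow> ('v \<Rightarrow> 'v \<Rightarrow> bool) \<Rightarrow> ('w \<Rightarrow> 'v)
     \<Rightarrow> ('w \<times> bool) list set \<Rightarrow> ('v \<times> bool) list set" where
  "raag_hom VL EL VG EG h =
     (\<lambda>S \<in> carrier (raag VL EL). \<Union>x\<in>S. raag_rel VG EG `` {map (\<lambda>(v, b). (h v, b)) x})"

text \<open>IA(A): automorphisms acting trivially on H_1(A) = A / [A,A].\<close>

definition IA :: "('a, 'b) monoid_scheme \<Rightarrow> ('a \<Rightarrow> 'a) set" where
  "IA G = {f \<in> auto G. \<forall>x\<in>carrier G. f x \<otimes>\<^bsub>G\<^esub> inv\<^bsub>G\<^esub> x \<in> derived G (carrier G)}"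

definition is_lift where
  "is_lift VL EL VG EG \<phi> f F \<longleftrightarrow>
     (\<forall>x\<in>carrier (raag VL EL). f (raag_hom VL EL VG EG \<phi> x) = raag_hom VL EL VG EG \<phi> (F x))"

definition LAut where
  "LAut VL EL VG EG \<phi> = {f \<in> auto (raag VG EG). \<exists>F\<in>auto (raag VL EL). is_lift VL EL VG EG \<phi> f F}"

definition FAut where
  "FAut VL EL VG EG \<phi> = {F \<in> auto (raag VL EL). \<exists>f\<in>auto (raag VG EG). is_lift VL EL VG EG \<phi> f F}"

definition FD where
  "FD VL EL VG EG \<phi> = {F \<in> auto (raag VL EL). is_lift VL EL VG EG \<phi> (\<lambda>x\<in>carrier (raag VG EG). x) F}"

definition lifted_aut where
  "lifted_aut VL EL VG EG \<phi> F = (THE f. f \<in> auto (raag VG EG) \<and> is_lift VL EL VG EG \<phi> f F)"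

definition Deck where
  "Deck VL EL \<phi> = {raag_hom VL EL VL EL \<mu> | \<mu>. \<mu> \<in> deck_graph VL EL \<phi>}"

end

theory Submission
  imports Defs "HOL-Library.Function_Algebras"
begin

(* The first sequence is exact for every surjective simplicial map \<phi>: since \<phi>\<^sub>* is onto, a
   lift F determines the automorphism f it lifts, lifts compose and invert, and F lifts the
   identity exactly when F \<in> FD.  Lifting respects IA, so F \<mapsto> f descends to the quotients
   by IA, and it remains to identify the kernel there with Deck.

   Deck transformations lift the identity, and one acting trivially on H\<^sub>1 fixes every
   generator, so Deck meets IA trivially.  Conversely, let F lift an f \<in> IA and let e(u) be the
   exponent vector of F(u) for a generator u.  As f acts trivially on H\<^sub>1, the fibre sums of
   e(u) give the indicator of \<phi>(u); as F(u) and F(v) commute for adjacent u, v, the 2x2 minors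
   of (e(u), e(v)) vanish at non-adjacent pairs of vertices.  Since a vertex has at most one
   neighbour in each fibre, this forces e(u) to be the indicator of a single vertex \<mu>(u) over
   \<phi>(u).  The map \<mu> is simplicial, the same construction for F\<^sup>-\<^sup>1 inverts it, so \<mu> is a
   deck transformation and F \<circ> \<mu>\<^sub>*\<^sup>-\<^sup>1 \<in> IA. *)

lemma AutoGroup_carrier [simp]: "carrier (AutoGroup G) = auto G"
  by (simp add: AutoGroup_def)

context group
begin

lemma auto_closed: "f \<in> auto G \<Longrightarrow> x \<in> carrier G \<Longrightarrow> f x \<in> carrier G"
  by (auto simp: auto_def hom_def)

lemma auto_mult_hom: "f \<in> auto G \<Longrightarrow> x \<in> carrier G \<Longrightarrow> y \<in> carrier G \<Longrightarrow> f (x \<otimes> y) = f x \<otimes> f y"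
  by (auto simp: auto_def hom_def)

lemma auto_group_hom: "f \<in> auto G \<Longrightarrow> group_hom G G f"
  by (simp add: auto_def group_hom_def group_hom_axioms_def is_group)

lemma auto_bij: "f \<in> auto G \<Longrightarrow> bij_betw f (carrier G) (carrier G)"
  by (simp add: auto_def Bij_def)

lemma AutoGroup_mult_apply:
  "f \<in> auto G \<Longrightarrow> g \<in> auto G \<Longrightarrow> x \<in> carrier G \<Longrightarrow> (f \<otimes>\<^bsub>AutoGroup G\<^esub> g) x = f (g x)"
  by (simp add: AutoGroup_def BijGroup_def auto_def compose_def)

lemma AutoGroup_one: "\<one>\<^bsub>AutoGroup G\<^esub> = (\<lambda>x\<in>carrier G. x)"
  by (simp add: AutoGroup_def BijGroup_def)

lemma AutoGroup_inv: "f \<in> auto G \<Longrightarrow> inv\<^bsub>AutoGroup G\<^esub> f = (\<lambda>x\<in>carrier G. inv_into (carrier G) f x)"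
  unfolding AutoGroup_def
  using group.m_inv_consistent[OF group_BijGroup subgroup_auto] by (simp add: inv_BijGroup auto_def)

lemma AutoGroup_m_closed: "f \<in> auto G \<Longrightarrow> g \<in> auto G \<Longrightarrow> f \<otimes>\<^bsub>AutoGroup G\<^esub> g \<in> auto G"
  using monoid.m_closed[OF group.is_monoid[OF AutoGroup]] by simp

lemma AutoGroup_inv_closed: "f \<in> auto G \<Longrightarrow> inv\<^bsub>AutoGroup G\<^esub> f \<in> auto G"
  using group.inv_closed[OF AutoGroup] by simp

lemma AutoGroup_inv_apply_right:
  "f \<in> auto G \<Longrightarrow> x \<in> carrier G \<Longrightarrow> f ((inv\<^bsub>AutoGroup G\<^esub> f) x) = x"
  using auto_bij[of f] by (simp add: AutoGroup_inv bij_betw_inv_into_right)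

lemma AutoGroup_inv_apply_left:
  "f \<in> auto G \<Longrightarrow> x \<in> carrier G \<Longrightarrow> (inv\<^bsub>AutoGroup G\<^esub> f) (f x) = x"
  using auto_bij[of f] auto_closed[of f x] by (simp add: AutoGroup_inv bij_betw_inv_into_left)

lemma auto_eqI: "f \<in> auto G \<Longrightarrow> g \<in> auto G \<Longrightarrow> (\<And>x. x \<in> carrier G \<Longrightarrow> f x = g x) \<Longrightarrow> f = g"
  by (rule extensionalityI[of f "carrier G"]) (auto simp: auto_def Bij_def)

lemma rcos_eq_iff:
  assumes "subgroup H G" "a \<in> carrier G" "b \<in> carrier G"
  shows "H #> a = H #> b \<longleftrightarrow> a \<otimes> inv b \<in> H"
proof
  assume "H #> a = H #> b"
  then have "a \<in> H #> b" using rcos_self[OF assms(2,1)] by simp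
  then show "a \<otimes> inv b \<in> H" using subgroup.rcos_module_imp[OF assms(1) is_group assms(3)] by blast
next
  assume "a \<otimes> inv b \<in> H"
  then have "a \<in> H #> b" using subgroup.rcos_module_rev[OF assms(1) is_group assms(3,2)] by blast
  then show "H #> a = H #> b" using repr_independence[OF _ assms(3,1)] by simp
qed

lemma commutator_in_derived:
  "a \<in> carrier G \<Longrightarrow> b \<in> carrier G \<Longrightarrow> a \<otimes> b \<otimes> inv a \<otimes> inv b \<in> derived G (carrier G)"
  unfolding derived_def by (rule generate.incl) blast

lemma auto_preserves_derived:
  assumes "f \<in> auto G" "d \<in> derived G (carrier G)"
  shows "f d \<in> derived G (carrier G)"
proof -
  interpret group_hom G G f by (rule auto_group_hom[OF assms(1)])
  have "f ` derived G (carrier G) = derived G (f ` carrier G)"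
    by (simp add: derived_img)
  also have "\<dots> \<subseteq> derived G (carrier G)"
    using auto_closed[OF assms(1)] by (intro mono_derived) auto
  finally show ?thesis using assms(2) by blast
qed

lemma IA_iff_rcos:
  "f \<in> IA G \<longleftrightarrow> f \<in> auto G \<and>
     (\<forall>x\<in>carrier G. derived G (carrier G) #> f x = derived G (carrier G) #> x)"
proof -
  have "derived G (carrier G) #> f x = derived G (carrier G) #> x \<longleftrightarrow> f x \<otimes> inv x \<in> derived G (carrier G)"
    if "f \<in> auto G" "x \<in> carrier G" for x
    using rcos_eq_iff[OF derived_is_subgroup[OF subset_refl] auto_closed[OF that] that(2)] .
  then show ?thesis by (cases "f \<in> auto G") (simp_all add: IA_def)
qed

lemma auto_rcos_derived_cong:
  assumes "f \<in> auto G" "a \<in> carrier G" "b \<in> carrier G"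
    and "derived G (carrier G) #> a = derived G (carrier G) #> b"
  shows "derived G (carrier G) #> f a = derived G (carrier G) #> f b"
proof -
  interpret group_hom G G f by (rule auto_group_hom[OF assms(1)])
  have "a \<otimes> inv b \<in> derived G (carrier G)"
    using assms(2-4) rcos_eq_iff[OF derived_is_subgroup] by simp
  then have "f (a \<otimes> inv b) \<in> derived G (carrier G)"
    by (rule auto_preserves_derived[OF assms(1)])
  then show ?thesis
    using assms(2,3) rcos_eq_iff[OF derived_is_subgroup] by simp
qed

lemma subgroup_IA: "subgroup (IA G) (AutoGroup G)"
proof (rule group.subgroupI[OF AutoGroup])
  show "IA G \<subseteq> carrier (AutoGroup G)" by (auto simp: IA_def)
  have "(\<lambda>x\<in>carrier G. x) \<in> IA G" using id_in_auto by (simp add: IA_iff_rcos)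
  then show "IA G \<noteq> {}" by blast
next
  fix f assume f: "f \<in> IA G"
  then have fa: "f \<in> auto G" by (simp add: IA_def)
  show "inv\<^bsub>AutoGroup G\<^esub> f \<in> IA G"
    unfolding IA_iff_rcos
  proof (intro conjI ballI)
    show "inv\<^bsub>AutoGroup G\<^esub> f \<in> auto G" by (rule AutoGroup_inv_closed[OF fa])
    fix x assume x: "x \<in> carrier G"
    let ?y = "(inv\<^bsub>AutoGroup G\<^esub> f) x"
    have "derived G (carrier G) #> x = derived G (carrier G) #> f ?y"
      by (simp add: AutoGroup_inv_apply_right[OF fa x])
    also have "\<dots> = derived G (carrier G) #> ?y"
      using f auto_closed[OF AutoGroup_inv_closed[OF fa] x] by (simp add: IA_iff_rcos)
    finally show "derived G (carrier G) #> ?y = derived G (carrier G) #> x" by (rule sym)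
  qed
next
  fix f g assume f: "f \<in> IA G" and g: "g \<in> IA G"
  then have fa: "f \<in> auto G" and ga: "g \<in> auto G" by (simp_all add: IA_def)
  show "f \<otimes>\<^bsub>AutoGroup G\<^esub> g \<in> IA G"
    unfolding IA_iff_rcos
  proof (intro conjI ballI)
    show "f \<otimes>\<^bsub>AutoGroup G\<^esub> g \<in> auto G" by (rule AutoGroup_m_closed[OF fa ga])
    fix x assume x: "x \<in> carrier G"
    have "derived G (carrier G) #> f (g x) = derived G (carrier G) #> g x"
      using f auto_closed[OF ga x] by (simp add: IA_iff_rcos)
    also have "\<dots> = derived G (carrier G) #> x" using g x by (simp add: IA_iff_rcos)
    finally show "derived G (carrier G) #> (f \<otimes>\<^bsub>AutoGroup G\<^esub> g) x = derived G (carrier G) #> x"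
      by (simp add: AutoGroup_mult_apply[OF fa ga x])
  qed
qed

lemma IA_normal: "IA G \<lhd> AutoGroup G"
  unfolding group.normal_inv_iff[OF AutoGroup]
proof (intro conjI ballI subgroup_IA)
  fix F n assume "F \<in> carrier (AutoGroup G)" and n: "n \<in> IA G"
  then have Fa: "F \<in> auto G" and na: "n \<in> auto G" by (simp_all add: IA_def)
  let ?F' = "inv\<^bsub>AutoGroup G\<^esub> F"
  have F'a: "?F' \<in> auto G" by (rule AutoGroup_inv_closed[OF Fa])
  have Fna: "F \<otimes>\<^bsub>AutoGroup G\<^esub> n \<in> auto G" by (rule AutoGroup_m_closed[OF Fa na])
  show "F \<otimes>\<^bsub>AutoGroup G\<^esub> n \<otimes>\<^bsub>AutoGroup G\<^esub> ?F' \<in> IA G"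
    unfolding IA_iff_rcos
  proof (intro conjI ballI)
    show "F \<otimes>\<^bsub>AutoGroup G\<^esub> n \<otimes>\<^bsub>AutoGroup G\<^esub> ?F' \<in> auto G"
      by (rule AutoGroup_m_closed[OF Fna F'a])
    fix x assume x: "x \<in> carrier G"
    let ?y = "?F' x"
    have y: "?y \<in> carrier G" by (rule auto_closed[OF F'a x])
    have "(F \<otimes>\<^bsub>AutoGroup G\<^esub> n \<otimes>\<^bsub>AutoGroup G\<^esub> ?F') x = F (n ?y)"
      by (simp add: AutoGroup_mult_apply[OF Fna F'a x] AutoGroup_mult_apply[OF Fa na y])
    moreover have "derived G (carrier G) #> F (n ?y) = derived G (carrier G) #> F ?y"
      using n y by (intro auto_rcos_derived_cong[OF Fa auto_closed[OF na y] y]) (simp add: IA_iff_rcos)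
    moreover have "F ?y = x" by (rule AutoGroup_inv_apply_right[OF Fa x])
    ultimately show "derived G (carrier G) #> (F \<otimes>\<^bsub>AutoGroup G\<^esub> n \<otimes>\<^bsub>AutoGroup G\<^esub> ?F') x =
        derived G (carrier G) #> x"
      by simp
  qed
qed
end


lemma (in normal) rcos_mon_of_Int_trivial:
  assumes "subgroup D G" "D \<inter> H \<subseteq> {\<one>}"
  shows "(\<lambda>d. H #> d) \<in> mon (G\<lparr>carrier := D\<rparr>) (G Mod H)"
  unfolding mon_def
proof (intro CollectI conjI homI)
  have D: "d \<in> carrier G" if "d \<in> D" for d
    using subgroup.subset[OF assms(1)] that by blast
  fix d assume "d \<in> carrier (G\<lparr>carrier := D\<rparr>)"
  then show "H #> d \<in> carrier (G Mod H)"
    using D by (simp add: FactGroup_def rcosetsI subset)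
next
  fix d e assume "d \<in> carrier (G\<lparr>carrier := D\<rparr>)" "e \<in> carrier (G\<lparr>carrier := D\<rparr>)"
  then have "d \<in> carrier G" "e \<in> carrier G" using subgroup.subset[OF assms(1)] by auto
  then show "H #> (d \<otimes>\<^bsub>G\<lparr>carrier := D\<rparr>\<^esub> e) = (H #> d) \<otimes>\<^bsub>G Mod H\<^esub> (H #> e)"
    by (simp add: rcos_sum)
next
  show "inj_on (\<lambda>d. H #> d) (carrier (G\<lparr>carrier := D\<rparr>))"
  proof (rule inj_onI)
    fix d e assume d: "d \<in> carrier (G\<lparr>carrier := D\<rparr>)" and e: "e \<in> carrier (G\<lparr>carrier := D\<rparr>)"
      and eq: "H #> d = H #> e"
    have dG: "d \<in> carrier G" and eG: "e \<in> carrier G"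
      using d e subgroup.subset[OF assms(1)] by auto
    have "d \<otimes> inv e \<in> H"
      using eq rcos_eq_iff[OF subgroup_axioms dG eG] by simp
    moreover have "d \<otimes> inv e \<in> D"
      using d e assms(1) by (simp add: subgroup.m_closed subgroup.m_inv_closed)
    ultimately have "d \<otimes> inv e = \<one>" using assms(2) by blast
    then show "d = e" using dG eG by (simp add: inv_solve_right')
  qed
qed

context group_hom
begin

lemma FactGroup_induced_rcos:
  assumes N: "N \<lhd> G" and M: "M \<lhd> H" and NM: "h ` N \<subseteq> M" and x: "x \<in> carrier G"
  shows "M #>\<^bsub>H\<^esub> h (SOME y. y \<in> N #> x) = M #>\<^bsub>H\<^esub> h x"
proof -
  have Nsub: "subgroup N G" and Msub: "subgroup M H"
    using N M by (simp_all add: normal_imp_subgroup)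
  have "x \<in> N #> x" by (rule G.rcos_self[OF x Nsub])
  then have "(SOME y. y \<in> N #> x) \<in> N #> x" by (rule someI)
  then obtain n where n: "n \<in> N" and y: "(SOME y. y \<in> N #> x) = n \<otimes> x"
    by (auto simp: r_coset_def)
  have nG: "n \<in> carrier G" using n subgroup.subset[OF Nsub] by blast
  have "h (n \<otimes> x) = h n \<otimes>\<^bsub>H\<^esub> h x" using nG x by simp
  moreover have "h n \<in> M" using n NM by blast
  ultimately have "h (n \<otimes> x) \<in> M #>\<^bsub>H\<^esub> h x"
    using H.rcosI[of "h n" M "h x"] subgroup.subset[OF Msub] x by simp
  then show ?thesis
    using H.repr_independence[OF _ _ Msub] x y by simp
qed

lemma FactGroup_induced_epi:
  assumes onto: "h ` carrier G = carrier H" and N: "N \<lhd> G" and M: "M \<lhd> H" and NM: "h ` N \<subseteq> M"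
  shows "(\<lambda>C. M #>\<^bsub>H\<^esub> h (SOME x. x \<in> C)) \<in> epi (G Mod N) (H Mod M)"
    (is "?q \<in> _")
proof -
  have q: "?q (N #> x) = M #>\<^bsub>H\<^esub> h x" if "x \<in> carrier G" for x
    using FactGroup_induced_rcos[OF N M NM that] .
  have Msub: "M \<subseteq> carrier H" using M by (simp add: normal_imp_subgroup subgroup.subset)
  have hom: "?q \<in> hom (G Mod N) (H Mod M)"
  proof (rule homI)
    fix C assume "C \<in> carrier (G Mod N)"
    then obtain x where "x \<in> carrier G" "C = N #> x" by (auto simp: carrier_FactGroup)
    then show "?q C \<in> carrier (H Mod M)"
      using q Msub by (simp add: carrier_FactGroup)
  next
    fix C1 C2 assume "C1 \<in> carrier (G Mod N)" "C2 \<in> carrier (G Mod N)"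
    then obtain x1 x2 where x: "x1 \<in> carrier G" "x2 \<in> carrier G" "C1 = N #> x1" "C2 = N #> x2"
      by (auto simp: carrier_FactGroup)
    then show "?q (C1 \<otimes>\<^bsub>G Mod N\<^esub> C2) = ?q C1 \<otimes>\<^bsub>H Mod M\<^esub> ?q C2"
      using q normal.rcos_sum[OF N] normal.rcos_sum[OF M] by simp
  qed
  have "?q ` carrier (G Mod N) = carrier (H Mod M)"
  proof
    show "?q ` carrier (G Mod N) \<subseteq> carrier (H Mod M)" using hom by (auto simp: hom_def)
    show "carrier (H Mod M) \<subseteq> ?q ` carrier (G Mod N)"
    proof
      fix Q assume "Q \<in> carrier (H Mod M)"
      then obtain y where y: "y \<in> carrier H" "Q = M #>\<^bsub>H\<^esub> y"
        by (auto simp: carrier_FactGroup)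
      moreover obtain x where "x \<in> carrier G" "y = h x"
        using y(1) onto by (metis imageE)
      ultimately have "x \<in> carrier G" "Q = M #>\<^bsub>H\<^esub> h x" by simp_all
      then show "Q \<in> ?q ` carrier (G Mod N)"
        using q by (auto simp: carrier_FactGroup)
    qed
  qed
  with hom show ?thesis by (simp add: epi_def)
qed

lemma FactGroup_induced_kernel:
  assumes N: "N \<lhd> G" and M: "M \<lhd> H" and NM: "h ` N \<subseteq> M"
    and D: "subgroup D G" "D \<subseteq> kernel G H h"
    and lift: "\<And>x. x \<in> carrier G \<Longrightarrow> h x \<in> M \<Longrightarrow> \<exists>d\<in>D. x \<in> N #> d"
  shows "kernel (G Mod N) (H Mod M) (\<lambda>C. M #>\<^bsub>H\<^esub> h (SOME x. x \<in> C)) = (\<lambda>d. N #> d) ` D"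
    (is "kernel _ _ ?q = _")
proof -
  have Nsub: "subgroup N G" and Msub: "subgroup M H"
    using N M by (simp_all add: normal_imp_subgroup)
  have ker: "?q (N #> x) = \<one>\<^bsub>H Mod M\<^esub> \<longleftrightarrow> h x \<in> M" if x: "x \<in> carrier G" for x
    using FactGroup_induced_rcos[OF N M NM x] H.coset_join1[OF _ _ Msub] H.coset_join2[OF _ Msub] x
    by auto
  have DG: "d \<in> carrier G" if "d \<in> D" for d using D(1) that subgroup.subset by blast
  show ?thesis
  proof
    show "kernel (G Mod N) (H Mod M) ?q \<subseteq> (\<lambda>d. N #> d) ` D"
    proof
      fix C assume "C \<in> kernel (G Mod N) (H Mod M) ?q"
      then obtain x where x: "x \<in> carrier G" "C = N #> x" "h x \<in> M"
        using ker by (auto simp: kernel_def carrier_FactGroup)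
      then obtain d where "d \<in> D" "x \<in> N #> d" using lift by blast
      then have "d \<in> D" "C = N #> d"
        using G.repr_independence[OF _ DG Nsub] x(2) by auto
      then show "C \<in> (\<lambda>d. N #> d) ` D" by blast
    qed
    show "(\<lambda>d. N #> d) ` D \<subseteq> kernel (G Mod N) (H Mod M) ?q"
    proof
      fix C assume "C \<in> (\<lambda>d. N #> d) ` D"
      then obtain d where d: "d \<in> D" "C = N #> d" by blast
      have "h d \<in> M" using d(1) D(2) subgroup.one_closed[OF Msub] by (auto simp: kernel_def)
      moreover have "N #> d \<in> carrier (G Mod N)" using DG[OF d(1)] by (simp add: carrier_FactGroup)
      ultimately show "C \<in> kernel (G Mod N) (H Mod M) ?q"
        using ker[OF DG[OF d(1)]] d(2) by (simp add: kernel_def)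
    qed
  qed
qed

end

section \<open>Right-angled Artin groups as quotients of words\<close>

lemma equivclp_invariant:
  assumes "\<And>x y. r x y \<Longrightarrow> g x = g y" and "equivclp r x y"
  shows "g x = g y"
  using assms(2) by (induction rule: equivclp_induct) (auto dest: assms(1))

lemma equivclp_map:
  assumes "\<And>x y. r x y \<Longrightarrow> equivclp s (f x) (f y)" and "equivclp r x y"
  shows "equivclp s (f x) (f y)"
  using assms(2)
  by (induction rule: equivclp_induct) (auto dest: assms(1) intro: equivclp_trans equivclp_sym)

lemma raag_words_append [simp]: "x @ y \<in> raag_words V \<longleftrightarrow> x \<in> raag_words V \<and> y \<in> raag_words V"
  by (auto simp: raag_words_def)

lemma raag_words_Cons [simp]: "l # y \<in> raag_words V \<longleftrightarrow> fst l \<in> V \<and> y \<in> raag_words V"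
  by (cases l) (auto simp: raag_words_def)

lemma raag_words_Nil [simp]: "[] \<in> raag_words V"
  by (auto simp: raag_words_def)

lemma raag_step_cancelI:
  "a @ b \<in> raag_words V \<Longrightarrow> v \<in> V \<Longrightarrow> raag_step V E (a @ [(v, c), (v, \<not> c)] @ b) (a @ b)"
  unfolding raag_step_def by auto

lemma raag_step_commI:
  assumes "E u v" "a @ b \<in> raag_words V" "u \<in> V" "v \<in> V"
  shows "raag_step V E (a @ [(u, c), (v, d)] @ b) (a @ [(v, d), (u, c)] @ b)"
proof -
  have "a @ [(u, c), (v, d)] @ b \<in> raag_words V" "a @ [(v, d), (u, c)] @ b \<in> raag_words V"
    using assms(2-4) by simp_all
  then show ?thesis unfolding raag_step_def using assms(1) by blast
qed

lemma raag_stepE: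
  assumes "raag_step V E x y"
  obtains (cancel) a b v c where "x = a @ [(v, c), (v, \<not> c)] @ b" "y = a @ b"
    | (comm) a b u v c d where "E u v" "x = a @ [(u, c), (v, d)] @ b" "y = a @ [(v, d), (u, c)] @ b"
  using assms unfolding raag_step_def by blast

lemma raag_step_words: "raag_step V E x y \<Longrightarrow> x \<in> raag_words V \<and> y \<in> raag_words V"
  by (simp add: raag_step_def)

lemma raag_step_in_context:
  assumes "raag_step V E x y" "p \<in> raag_words V" "s \<in> raag_words V"
  shows "raag_step V E (p @ x @ s) (p @ y @ s)"
  using assms(1)
proof (cases rule: raag_stepE)
  case (cancel a b v c)
  then show ?thesis
    using raag_step_cancelI[of "p @ a" "b @ s" V v E c] raag_step_words[OF assms(1)] assms(2,3) by simp
next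
  case (comm a b u v c d)
  then show ?thesis
    using raag_step_commI[of E u v "p @ a" "b @ s" V c d] raag_step_words[OF assms(1)] assms(2,3) by simp
qed

lemma raag_rel_iff:
  "(x, y) \<in> raag_rel V E \<longleftrightarrow> x \<in> raag_words V \<and> y \<in> raag_words V \<and> equivclp (raag_step V E) x y"
  by (simp add: raag_rel_def)

lemma equiv_raag_rel: "equiv (raag_words V) (raag_rel V E)"
  by (rule equivI) (auto simp: raag_rel_def refl_on_def sym_def trans_def
      intro: equivclp_sym equivclp_trans)

lemma raag_rel_refl: "x \<in> raag_words V \<Longrightarrow> (x, x) \<in> raag_rel V E"
  by (simp add: raag_rel_iff)

lemma raag_rel_step: "raag_step V E x y \<Longrightarrow> (x, y) \<in> raag_rel V E"
  by (auto simp: raag_rel_iff dest: raag_step_words)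

lemma raag_rel_trans: "(x, y) \<in> raag_rel V E \<Longrightarrow> (y, z) \<in> raag_rel V E \<Longrightarrow> (x, z) \<in> raag_rel V E"
  by (auto simp: raag_rel_iff intro: equivclp_trans)

lemma raag_rel_append:
  assumes "(x, x') \<in> raag_rel V E" "(y, y') \<in> raag_rel V E"
  shows "(x @ y, x' @ y') \<in> raag_rel V E"
proof -
  have w: "x \<in> raag_words V" "x' \<in> raag_words V" "y \<in> raag_words V" "y' \<in> raag_words V"
    and x: "equivclp (raag_step V E) x x'" and y: "equivclp (raag_step V E) y y'"
    using assms by (auto simp: raag_rel_iff)
  have "equivclp (raag_step V E) (x @ y) (x' @ y)"
  proof (rule equivclp_map[where f="\<lambda>t. t @ y", OF _ x])
    fix s t assume "raag_step V E s t"
    then show "equivclp (raag_step V E) (s @ y) (t @ y)"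
      using raag_step_in_context[of V E s t "[]" y] w by (simp add: r_into_equivclp)
  qed
  moreover have "equivclp (raag_step V E) (x' @ y) (x' @ y')"
  proof (rule equivclp_map[where f="\<lambda>t. x' @ t", OF _ y])
    fix s t assume "raag_step V E s t"
    then show "equivclp (raag_step V E) (x' @ s) (x' @ t)"
      using raag_step_in_context[of V E s t x' "[]"] w by (simp add: r_into_equivclp)
  qed
  ultimately show ?thesis using w by (auto simp: raag_rel_iff intro: equivclp_trans)
qed

definition raag_class :: "'v set \<Rightarrow> ('v \<Rightarrow> 'v \<Rightarrow> bool) \<Rightarrow> ('v \<times> bool) list \<Rightarrow> ('v \<times> bool) list set" where
  "raag_class V E x = raag_rel V E `` {x}"

definition word_inv :: "('v \<times> bool) list \<Rightarrow> ('v \<times> bool) list" where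
  "word_inv x = rev (map (\<lambda>(v, b). (v, \<not> b)) x)"

lemma word_inv_words [simp]: "word_inv x \<in> raag_words V \<longleftrightarrow> x \<in> raag_words V"
  by (auto simp: word_inv_def raag_words_def)

lemma word_inv_inv [simp]: "word_inv (word_inv x) = x"
  by (induction x) (auto simp: word_inv_def)

lemma raag_rel_word_inv_right: "x \<in> raag_words V \<Longrightarrow> (x @ word_inv x, []) \<in> raag_rel V E"
proof (induction x)
  case Nil then show ?case by (simp add: word_inv_def raag_rel_refl)
next
  case (Cons l x)
  obtain v c where l: "l = (v, c)" by (cases l)
  have v: "v \<in> V" and x: "x \<in> raag_words V" using Cons.prems l by auto
  have "([l] @ (x @ word_inv x) @ [(v, \<not> c)], [l] @ [] @ [(v, \<not> c)]) \<in> raag_rel V E"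
    by (intro raag_rel_append Cons.IH x raag_rel_refl) (auto simp: l v)
  moreover have "([] @ [(v, c), (v, \<not> c)] @ [], []) \<in> raag_rel V E"
    using raag_step_cancelI[of "[]" "[]" V v E c] v by (intro raag_rel_step) simp
  ultimately show ?case by (auto simp: l word_inv_def intro: raag_rel_trans)
qed

lemma raag_rel_word_inv_left: "x \<in> raag_words V \<Longrightarrow> (word_inv x @ x, []) \<in> raag_rel V E"
  using raag_rel_word_inv_right[of "word_inv x" V E] by simp

lemma raag_class_carrier: "x \<in> raag_words V \<Longrightarrow> raag_class V E x \<in> carrier (raag V E)"
  by (auto simp: raag_def raag_class_def quotient_def)

lemma carrier_raagE:
  assumes "P \<in> carrier (raag V E)"
  obtains x where "x \<in> raag_words V" "P = raag_class V E x"
  using assms by (auto simp: raag_def raag_class_def quotient_def)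

lemma raag_class_eq_iff:
  "x \<in> raag_words V \<Longrightarrow> y \<in> raag_words V \<Longrightarrow> raag_class V E x = raag_class V E y \<longleftrightarrow> (x, y) \<in> raag_rel V E"
  unfolding raag_class_def using equiv_class_eq_iff[OF equiv_raag_rel] by auto

lemma raag_mult_class:
  assumes "x \<in> raag_words V" "y \<in> raag_words V"
  shows "raag_class V E x \<otimes>\<^bsub>raag V E\<^esub> raag_class V E y = raag_class V E (x @ y)"
proof -
  have "x \<in> raag_class V E x" "y \<in> raag_class V E y"
    using assms by (auto simp: raag_class_def raag_rel_refl)
  then show ?thesis
    by (auto simp: raag_def raag_class_def intro: raag_rel_trans raag_rel_append)
qed

lemma raag_one: "\<one>\<^bsub>raag V E\<^esub> = raag_class V E []"
  by (simp add: raag_def raag_class_def)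

lemma raag_group: "group (raag V E)"
proof (rule groupI)
  fix P Q assume "P \<in> carrier (raag V E)" "Q \<in> carrier (raag V E)"
  then show "P \<otimes>\<^bsub>raag V E\<^esub> Q \<in> carrier (raag V E)"
    by (elim carrier_raagE) (simp add: raag_mult_class raag_class_carrier)
next
  show "\<one>\<^bsub>raag V E\<^esub> \<in> carrier (raag V E)" by (simp add: raag_one raag_class_carrier)
next
  fix P Q S assume "P \<in> carrier (raag V E)" "Q \<in> carrier (raag V E)" "S \<in> carrier (raag V E)"
  then show "P \<otimes>\<^bsub>raag V E\<^esub> Q \<otimes>\<^bsub>raag V E\<^esub> S = P \<otimes>\<^bsub>raag V E\<^esub> (Q \<otimes>\<^bsub>raag V E\<^esub> S)"
    by (elim carrier_raagE) (simp add: raag_mult_class)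
next
  fix P assume "P \<in> carrier (raag V E)"
  then show "\<one>\<^bsub>raag V E\<^esub> \<otimes>\<^bsub>raag V E\<^esub> P = P"
    by (elim carrier_raagE) (simp add: raag_mult_class raag_one)
next
  fix P assume "P \<in> carrier (raag V E)"
  then obtain x where x: "x \<in> raag_words V" "P = raag_class V E x" by (elim carrier_raagE)
  show "\<exists>Q\<in>carrier (raag V E). Q \<otimes>\<^bsub>raag V E\<^esub> P = \<one>\<^bsub>raag V E\<^esub>"
    using x raag_rel_word_inv_left[of x V E]
    by (intro bexI[of _ "raag_class V E (word_inv x)"])
      (auto simp: raag_mult_class raag_one raag_class_eq_iff raag_class_carrier)
qed

lemma raag_inv_class:
  assumes "x \<in> raag_words V"
  shows "inv\<^bsub>raag V E\<^esub> (raag_class V E x) = raag_class V E (word_inv x)"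
  using assms raag_rel_word_inv_left[of x V E]
  by (intro group.inv_equality[OF raag_group])
    (auto simp: raag_mult_class raag_one raag_class_eq_iff raag_class_carrier)

definition word_map :: "('a \<Rightarrow> 'b) \<Rightarrow> ('a \<times> bool) list \<Rightarrow> ('b \<times> bool) list" where
  "word_map h x = map (\<lambda>(v, b). (h v, b)) x"

lemma word_map_simps [simp]:
  "word_map h [] = []" "word_map h ((v, b) # x) = (h v, b) # word_map h x"
  "word_map h (x @ y) = word_map h x @ word_map h y"
  by (simp_all add: word_map_def)

lemma word_map_words: "h ` V \<subseteq> V' \<Longrightarrow> x \<in> raag_words V \<Longrightarrow> word_map h x \<in> raag_words V'"
  by (auto simp: word_map_def raag_words_def)

lemma word_map_comp: "word_map g (word_map h x) = word_map (g \<circ> h) x"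
  by (induction x) (auto simp: word_map_def)

lemma word_map_cong: "x \<in> raag_words V \<Longrightarrow> (\<And>v. v \<in> V \<Longrightarrow> h v = h' v) \<Longrightarrow> word_map h x = word_map h' x"
  by (induction x) (auto simp: word_map_def raag_words_def)

lemma word_map_id [simp]: "word_map (\<lambda>v. v) x = x"
  by (induction x) (auto simp: word_map_def)

definition simplicial_map :: "'v set \<Rightarrow> ('v \<Rightarrow> 'v \<Rightarrow> bool) \<Rightarrow> 'w set \<Rightarrow> ('w \<Rightarrow> 'w \<Rightarrow> bool) \<Rightarrow> ('v \<Rightarrow> 'w) \<Rightarrow> bool" where
  "simplicial_map V E V' E' h \<longleftrightarrow> h ` V \<subseteq> V' \<and> (\<forall>u v. E u v \<longrightarrow> E' (h u) (h v))"

lemma simplicial_map_comp: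
  "simplicial_map V E V' E' h \<Longrightarrow> simplicial_map V' E' V'' E'' g \<Longrightarrow> simplicial_map V E V'' E'' (g \<circ> h)"
  by (force simp: simplicial_map_def)

lemma raag_step_map:
  assumes h: "simplicial_map V E V' E' h" and st: "raag_step V E x y"
  shows "raag_step V' E' (word_map h x) (word_map h y)"
  using st
proof (cases rule: raag_stepE)
  case (cancel a b v c)
  have "word_map h a \<in> raag_words V'" "word_map h b \<in> raag_words V'" "h v \<in> V'"
    using raag_step_words[OF st] cancel h by (auto simp: simplicial_map_def intro: word_map_words)
  then show ?thesis using raag_step_cancelI[of "word_map h a" "word_map h b" V' "h v" E' c] cancel by simp
next
  case (comm a b u v c d)
  have "word_map h a \<in> raag_words V'" "word_map h b \<in> raag_words V'" "h u \<in> V'" "h v \<in> V'"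
    "E' (h u) (h v)"
    using raag_step_words[OF st] comm h by (auto simp: simplicial_map_def intro: word_map_words)
  then show ?thesis
    using raag_step_commI[of E' "h u" "h v" "word_map h a" "word_map h b" V' c d] comm by simp
qed

lemma raag_rel_map:
  assumes h: "simplicial_map V E V' E' h" and r: "(x, y) \<in> raag_rel V E"
  shows "(word_map h x, word_map h y) \<in> raag_rel V' E'"
proof -
  have "equivclp (raag_step V' E') (word_map h x) (word_map h y)"
    using r unfolding raag_rel_iff
    by (auto intro: equivclp_map[where f="word_map h"] r_into_equivclp raag_step_map[OF h])
  then show ?thesis using r h by (auto simp: raag_rel_iff simplicial_map_def intro: word_map_words)
qed

lemma raag_hom_class:
  assumes h: "simplicial_map V E V' E' h" and x: "x \<in> raag_words V"
  shows "raag_hom V E V' E' h (raag_class V E x) = raag_class V' E' (word_map h x)"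
proof -
  have "x \<in> raag_class V E x" using x by (simp add: raag_class_def raag_rel_refl)
  then have "(\<Union>y\<in>raag_class V E x. raag_rel V' E' `` {word_map h y}) = raag_class V' E' (word_map h x)"
    using raag_rel_map[OF h]
    by (auto simp: raag_class_def intro: raag_rel_trans)
  then show ?thesis using raag_class_carrier[OF x] by (simp add: raag_hom_def word_map_def)
qed

lemma raag_hom_hom:
  assumes h: "simplicial_map V E V' E' h"
  shows "raag_hom V E V' E' h \<in> hom (raag V E) (raag V' E')"
proof (rule homI)
  have w: "word_map h x \<in> raag_words V'" if "x \<in> raag_words V" for x
    using h that by (auto simp: simplicial_map_def intro: word_map_words)
  fix P assume "P \<in> carrier (raag V E)"
  then show "raag_hom V E V' E' h P \<in> carrier (raag V' E')"
    by (elim carrier_raagE) (simp add: raag_hom_class[OF h] raag_class_carrier w)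
  fix Q assume "Q \<in> carrier (raag V E)"
  with \<open>P \<in> carrier (raag V E)\<close>
  show "raag_hom V E V' E' h (P \<otimes>\<^bsub>raag V E\<^esub> Q) =
      raag_hom V E V' E' h P \<otimes>\<^bsub>raag V' E'\<^esub> raag_hom V E V' E' h Q"
    by (elim carrier_raagE) (simp add: raag_mult_class raag_hom_class[OF h] w)
qed

lemma raag_hom_closed:
  "simplicial_map V E V' E' h \<Longrightarrow> P \<in> carrier (raag V E) \<Longrightarrow> raag_hom V E V' E' h P \<in> carrier (raag V' E')"
  using raag_hom_hom by (blast intro: hom_in_carrier)

lemma raag_hom_cong:
  assumes "\<And>v. v \<in> V \<Longrightarrow> h v = h' v"
  shows "raag_hom V E V' E' h = raag_hom V E V' E' h'"
proof -
  have "word_map h y = word_map h' y" if "y \<in> P" "P \<in> carrier (raag V E)" for y P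
    using that assms by (auto elim!: carrier_raagE simp: raag_class_def raag_rel_iff intro: word_map_cong)
  then show ?thesis
    unfolding raag_hom_def word_map_def[symmetric] by (intro restrict_ext SUP_cong) auto
qed

lemma raag_hom_comp:
  assumes h: "simplicial_map V E V' E' h" and g: "simplicial_map V' E' V'' E'' g"
    and P: "P \<in> carrier (raag V E)"
  shows "raag_hom V' E' V'' E'' g (raag_hom V E V' E' h P) = raag_hom V E V'' E'' (g \<circ> h) P"
  using P
proof (elim carrier_raagE)
  fix x assume x: "x \<in> raag_words V" "P = raag_class V E x"
  have "word_map h x \<in> raag_words V'" using h x by (auto simp: simplicial_map_def intro: word_map_words)
  then show ?thesis
    using x h g simplicial_map_comp[OF h g] by (simp add: raag_hom_class word_map_comp)
qed

lemma raag_hom_id_on: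
  assumes "\<And>v. v \<in> V \<Longrightarrow> h v = v"
  shows "raag_hom V E V E h = (\<lambda>P\<in>carrier (raag V E). P)"
proof -
  have "raag_hom V E V E h = raag_hom V E V E (\<lambda>v. v)" by (rule raag_hom_cong) (simp add: assms)
  moreover have "raag_hom V E V E (\<lambda>v. v) P = P" if "P \<in> carrier (raag V E)" for P
    using that by (elim carrier_raagE) (simp add: raag_hom_class simplicial_map_def)
  moreover have "raag_hom V E V E (\<lambda>v. v) P = undefined" if "P \<notin> carrier (raag V E)" for P
    using that by (simp add: raag_hom_def)
  ultimately show ?thesis by (auto simp: fun_eq_iff)
qed

lemma graph_aut_simplicial:
  assumes "simple_graph V E" "graph_aut V E \<mu>"
  shows "simplicial_map V E V E \<mu>"
  using assms by (auto simp: simplicial_map_def simple_graph_def graph_aut_def bij_betw_def)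

lemma graph_aut_inv:
  assumes "graph_aut V E \<mu>"
  shows "graph_aut V E (inv_into V \<mu>)"
proof -
  have b: "bij_betw \<mu> V V" using assms by (simp add: graph_aut_def)
  have "E (inv_into V \<mu> u) (inv_into V \<mu> v) \<longleftrightarrow> E u v" if "u \<in> V" "v \<in> V" for u v
    using assms that bij_betw_inv_into_right[OF b] bij_betwE[OF bij_betw_inv_into[OF b]]
    unfolding graph_aut_def by metis
  then show ?thesis using bij_betw_inv_into[OF b] by (simp add: graph_aut_def)
qed

lemma raag_hom_graph_aut:
  assumes G: "simple_graph V E" and \<mu>: "graph_aut V E \<mu>"
  shows "raag_hom V E V E \<mu> \<in> auto (raag V E)"
proof -
  let ?\<nu> = "inv_into V \<mu>"
  have b: "bij_betw \<mu> V V" using \<mu> by (simp add: graph_aut_def)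
  have sm: "simplicial_map V E V E \<mu>" "simplicial_map V E V E ?\<nu>"
    using graph_aut_simplicial[OF G] \<mu> graph_aut_inv[OF \<mu>] by auto
  have inverse: "raag_hom V E V E \<sigma> (raag_hom V E V E \<tau> P) = P"
    if "simplicial_map V E V E \<sigma>" "simplicial_map V E V E \<tau>" "\<And>v. v \<in> V \<Longrightarrow> \<sigma> (\<tau> v) = v"
      and "P \<in> carrier (raag V E)" for \<sigma> \<tau> P
    using raag_hom_comp[OF that(2,1,4)] raag_hom_id_on[of V "\<sigma> \<circ> \<tau>" E] that(3,4) by simp
  have "bij_betw (raag_hom V E V E \<mu>) (carrier (raag V E)) (carrier (raag V E))"
    using sm raag_hom_closed bij_betw_inv_into_left[OF b] bij_betw_inv_into_right[OF b]
    by (intro bij_betw_byWitness[where f'="raag_hom V E V E ?\<nu>"]) (auto simp: inverse)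
  then show ?thesis
    using raag_hom_hom[OF sm(1)] by (simp add: auto_def Bij_def raag_hom_def)
qed

section \<open>Exponent vectors and the abelianisation\<close>

fun word_exp :: "('a \<times> bool) list \<Rightarrow> 'a \<Rightarrow> int" where
  "word_exp [] = (\<lambda>_. 0)"
| "word_exp ((v, b) # w) = (\<lambda>u. (if u = v then (if b then 1 else -1) else 0) + word_exp w u)"

lemma word_exp_append_apply: "word_exp (x @ y) u = word_exp x u + word_exp y u"
  by (induction x rule: word_exp.induct) auto

lemma word_exp_append: "word_exp (x @ y) = word_exp x + word_exp y"
  by (simp add: fun_eq_iff word_exp_append_apply)

lemma word_exp_inv: "word_exp (word_inv x) = - word_exp x"
proof -
  have "word_exp (word_inv x) u = - word_exp x u" for u
    by (induction x rule: word_exp.induct) (auto simp: word_inv_def word_exp_append_apply)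
  then show ?thesis by (simp add: fun_eq_iff)
qed

lemma word_exp_raag_step: "raag_step V E x y \<Longrightarrow> word_exp x = word_exp y"
  by (elim raag_stepE) (auto simp: word_exp_append_apply fun_eq_iff)

lemma word_exp_raag_rel: "(x, y) \<in> raag_rel V E \<Longrightarrow> word_exp x = word_exp y"
  unfolding raag_rel_iff using equivclp_invariant[of "raag_step V E" word_exp x y] word_exp_raag_step
  by blast

lemma word_exp_outside: "x \<in> raag_words V \<Longrightarrow> u \<notin> V \<Longrightarrow> word_exp x u = 0"
  by (induction x rule: word_exp.induct) auto

lemma word_exp_pos_mem: "word_exp w v > 0 \<Longrightarrow> (v, True) \<in> set w"
  by (induction w rule: word_exp.induct) (auto split: if_splits)

lemma word_exp_neg_mem: "word_exp w v < 0 \<Longrightarrow> (v, False) \<in> set w"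
  by (induction w rule: word_exp.induct) (auto split: if_splits)

lemma word_exp_map:
  assumes "finite V" "x \<in> raag_words V"
  shows "word_exp (word_map h x) u = (\<Sum>v\<in>{v\<in>V. h v = u}. word_exp x v)"
  using assms(2)
proof (induction x rule: word_exp.induct)
  case (2 v b w)
  then have "v \<in> V" "w \<in> raag_words V" by auto
  with 2 assms(1) show ?case by (simp add: sum.distrib sum.delta')
qed simp

text \<open>The image of an element of \<open>A\<^sub>\<Gamma>\<close> in \<open>H\<^sub>1(A\<^sub>\<Gamma>) = \<int>\<^bsup>V\<^esup>\<close>.\<close>

definition exp_vec :: "('a \<times> bool) list set \<Rightarrow> 'a \<Rightarrow> int" where
  "exp_vec P = word_exp (SOME x. x \<in> P)"

lemma exp_vec_class: "x \<in> raag_words V \<Longrightarrow> exp_vec (raag_class V E x) = word_exp x"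
proof -
  assume x: "x \<in> raag_words V"
  then have "x \<in> raag_class V E x" by (simp add: raag_class_def raag_rel_refl)
  then have "(SOME y. y \<in> raag_class V E x) \<in> raag_class V E x" by (rule someI)
  then show ?thesis by (auto simp: exp_vec_def raag_class_def dest: word_exp_raag_rel)
qed

lemma exp_vec_mult:
  "P \<in> carrier (raag V E) \<Longrightarrow> Q \<in> carrier (raag V E) \<Longrightarrow>
   exp_vec (P \<otimes>\<^bsub>raag V E\<^esub> Q) = exp_vec P + exp_vec Q"
  by (elim carrier_raagE) (simp add: raag_mult_class exp_vec_class word_exp_append)

lemma exp_vec_inv: "P \<in> carrier (raag V E) \<Longrightarrow> exp_vec (inv\<^bsub>raag V E\<^esub> P) = - exp_vec P"
  by (elim carrier_raagE) (simp add: raag_inv_class exp_vec_class word_exp_inv)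

lemma exp_vec_one: "exp_vec (\<one>\<^bsub>raag V E\<^esub>) = 0"
  by (simp add: raag_one exp_vec_class zero_fun_def)

lemma exp_vec_outside: "P \<in> carrier (raag V E) \<Longrightarrow> u \<notin> V \<Longrightarrow> exp_vec P u = 0"
  by (elim carrier_raagE) (simp add: exp_vec_class word_exp_outside)

lemma exp_vec_derived:
  assumes "P \<in> derived (raag V E) (carrier (raag V E))"
  shows "exp_vec P = 0"
proof -
  interpret group "raag V E" by (rule raag_group)
  have "P \<in> carrier (raag V E) \<and> exp_vec P = 0"
    using assms unfolding derived_def
    by (induction rule: generate.induct) (auto simp: exp_vec_one exp_vec_mult exp_vec_inv)
  then show ?thesis ..
qed

lemma raag_class_cancel_pair:
  fixes V :: "'v set" and E :: "'v \<Rightarrow> 'v \<Rightarrow> bool" and c :: bool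
  assumes "v \<in> V" "s \<in> raag_words V" "t \<in> raag_words V"
  defines "A \<equiv> raag V E"
  defines "g \<equiv> raag_class V E [(v, c)]" and "S \<equiv> raag_class V E s"
  shows "raag_class V E ((v, c) # s @ (v, \<not> c) # t) =
    (g \<otimes>\<^bsub>A\<^esub> S \<otimes>\<^bsub>A\<^esub> inv\<^bsub>A\<^esub> g \<otimes>\<^bsub>A\<^esub> inv\<^bsub>A\<^esub> S) \<otimes>\<^bsub>A\<^esub> raag_class V E (s @ t)"
proof -
  interpret group A unfolding A_def by (rule raag_group)
  let ?T = "raag_class V E t"
  have gc: "g \<in> carrier A" and Sc: "S \<in> carrier A" and Tc: "?T \<in> carrier A"
    using assms by (simp_all add: raag_class_carrier)
  have inv_g: "raag_class V E [(v, \<not> c)] = inv\<^bsub>A\<^esub> g"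
    using raag_inv_class[of "[(v, c)]" V E] assms(1) by (simp add: A_def g_def word_inv_def)
  have "raag_class V E ((v, c) # s @ (v, \<not> c) # t) =
      g \<otimes>\<^bsub>A\<^esub> (S \<otimes>\<^bsub>A\<^esub> (raag_class V E [(v, \<not> c)] \<otimes>\<^bsub>A\<^esub> ?T))"
    using assms(1-3) by (simp add: A_def g_def S_def raag_mult_class)
  also have "\<dots> = (g \<otimes>\<^bsub>A\<^esub> S \<otimes>\<^bsub>A\<^esub> inv\<^bsub>A\<^esub> g \<otimes>\<^bsub>A\<^esub> inv\<^bsub>A\<^esub> S) \<otimes>\<^bsub>A\<^esub> (S \<otimes>\<^bsub>A\<^esub> ?T)"
  proof -
    have "inv\<^bsub>A\<^esub> S \<otimes>\<^bsub>A\<^esub> (S \<otimes>\<^bsub>A\<^esub> ?T) = ?T" using Sc Tc by (simp add: m_assoc[symmetric])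
    then show ?thesis using gc Sc Tc by (simp add: inv_g m_assoc)
  qed
  finally show ?thesis using assms(2,3) by (simp add: A_def S_def raag_mult_class)
qed

lemma derived_if_word_exp_zero:
  assumes "x \<in> raag_words V" "word_exp x = 0"
  shows "raag_class V E x \<in> derived (raag V E) (carrier (raag V E))"
  using assms
proof (induction "length x" arbitrary: x rule: less_induct)
  case less
  interpret group "raag V E" by (rule raag_group)
  have sub: "subgroup (derived (raag V E) (carrier (raag V E))) (raag V E)"
    by (rule derived_is_subgroup) simp
  show ?case
  proof (cases x)
    case Nil
    then show ?thesis using subgroup.one_closed[OF sub] by (simp add: raag_one)
  next
    case (Cons l x')
    obtain v c where l: "l = (v, c)" by (cases l)
    have v: "v \<in> V" and x': "x' \<in> raag_words V" using less.prems(1) Cons l by auto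
    have "word_exp x v = 0" using less.prems(2) by simp
    then have "word_exp x' v = (if c then -1 else 1)" using Cons l by auto
    then have "(v, \<not> c) \<in> set x'" using word_exp_pos_mem[of x' v] word_exp_neg_mem[of x' v] by (cases c) auto
    then obtain s t where st: "x' = s @ (v, \<not> c) # t" by (meson split_list)
    have s: "s \<in> raag_words V" and t: "t \<in> raag_words V" using x' st by auto
    have "word_exp (s @ t) u = 0" for u
      using fun_cong[OF less.prems(2), of u] Cons l st
      by (simp add: word_exp_append_apply split: if_splits)
    then have "word_exp (s @ t) = 0" by (simp add: fun_eq_iff)
    moreover have "length (s @ t) < length x" using Cons st by simp
    ultimately have "raag_class V E (s @ t) \<in> derived (raag V E) (carrier (raag V E))"
      using less.hyps s t by simp
    moreover have "raag_class V E [(v, c)] \<otimes>\<^bsub>raag V E\<^esub> raag_class V E s \<otimes>\<^bsub>raag V E\<^esub>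
        inv\<^bsub>raag V E\<^esub> raag_class V E [(v, c)] \<otimes>\<^bsub>raag V E\<^esub> inv\<^bsub>raag V E\<^esub> raag_class V E s
        \<in> derived (raag V E) (carrier (raag V E))"
      using v s by (simp add: commutator_in_derived raag_class_carrier)
    ultimately show ?thesis
      using raag_class_cancel_pair[OF v s t] Cons l st subgroup.m_closed[OF sub] by simp
  qed
qed

lemma derived_raag_iff:
  "P \<in> carrier (raag V E) \<Longrightarrow> P \<in> derived (raag V E) (carrier (raag V E)) \<longleftrightarrow> exp_vec P = 0"
  by (auto elim!: carrier_raagE simp: exp_vec_class intro: derived_if_word_exp_zero dest: exp_vec_derived)

lemma IA_raag_iff:
  "f \<in> IA (raag V E) \<longleftrightarrow> f \<in> auto (raag V E) \<and> (\<forall>z\<in>carrier (raag V E). exp_vec (f z) = exp_vec z)"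
proof -
  interpret group "raag V E" by (rule raag_group)
  have "f z \<otimes>\<^bsub>raag V E\<^esub> inv\<^bsub>raag V E\<^esub> z \<in> derived (raag V E) (carrier (raag V E)) \<longleftrightarrow>
      exp_vec (f z) = exp_vec z" if "f \<in> auto (raag V E)" "z \<in> carrier (raag V E)" for z
    using that auto_closed[OF that] by (simp add: derived_raag_iff exp_vec_mult exp_vec_inv)
  then show ?thesis by (auto simp: IA_def)
qed

lemma exp_vec_raag_hom:
  assumes "finite V" "simplicial_map V E V' E' h" "P \<in> carrier (raag V E)"
  shows "exp_vec (raag_hom V E V' E' h P) u = (\<Sum>v\<in>{v\<in>V. h v = u}. exp_vec P v)"
  using assms(3)
proof (elim carrier_raagE)
  fix x assume x: "x \<in> raag_words V" "P = raag_class V E x"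
  have "word_map h x \<in> raag_words V'"
    using x(1) assms(2) by (auto simp: simplicial_map_def intro: word_map_words)
  then show ?thesis
    using x assms(1,2) by (simp add: raag_hom_class exp_vec_class word_exp_map)
qed

lemma exp_vec_aut_apply:
  assumes V: "finite V" and G: "G \<in> auto (raag V E)"
    and gen: "\<And>u. u \<in> V \<Longrightarrow> exp_vec (G (raag_class V E [(u, True)])) = (\<lambda>z. if z = \<sigma> u then 1 else 0)"
    and P: "P \<in> carrier (raag V E)"
  shows "exp_vec (G P) w = (\<Sum>u\<in>{u\<in>V. \<sigma> u = w}. exp_vec P u)"
proof -
  interpret group_hom "raag V E" "raag V E" G
    by (rule group.auto_group_hom[OF raag_group G])
  have letter: "exp_vec (G (raag_class V E [(v, b)])) = (\<lambda>z. (if b then 1 else -1) * (if z = \<sigma> v then 1 else 0))"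
    if v: "v \<in> V" for v b
  proof (cases b)
    case False
    have "raag_class V E [(v, False)] = inv\<^bsub>raag V E\<^esub> raag_class V E [(v, True)]"
      using raag_inv_class[of "[(v, True)]" V E] v by (simp add: word_inv_def)
    then show ?thesis
      using False gen[OF v] v by (simp add: exp_vec_inv raag_class_carrier fun_eq_iff)
  qed (simp add: gen[OF v] fun_eq_iff)
  obtain x where x: "x \<in> raag_words V" "P = raag_class V E x" using P by (elim carrier_raagE)
  have "exp_vec (G (raag_class V E x)) w = (\<Sum>u\<in>{u\<in>V. \<sigma> u = w}. word_exp x u)"
    using x(1)
  proof (induction x rule: word_exp.induct)
    case 1
    then show ?case by (simp add: raag_one[symmetric] exp_vec_one)
  next
    case (2 v b x')
    have v: "v \<in> V" and x': "x' \<in> raag_words V" using "2.prems" by auto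
    have "raag_class V E ((v, b) # x') = raag_class V E [(v, b)] \<otimes>\<^bsub>raag V E\<^esub> raag_class V E x'"
      using v x' by (simp add: raag_mult_class)
    then have "exp_vec (G (raag_class V E ((v, b) # x'))) w =
        (if b then 1 else -1) * (if w = \<sigma> v then 1 else 0) + exp_vec (G (raag_class V E x')) w"
      using v x' letter[OF v] by (simp add: exp_vec_mult raag_class_carrier)
    also have "\<dots> = (\<Sum>u\<in>{u\<in>V. \<sigma> u = w}. (if u = v then (if b then 1 else -1) else 0) + word_exp x' u)"
      using "2.IH"[OF x'] v V by (simp add: sum.distrib sum.delta')
    finally show ?case by simp
  qed
  then show ?thesis using x by (simp add: exp_vec_class)
qed

section \<open>Exponent vectors of commuting elements\<close>

text \<open>Signed count of the letters \<open>p\<^sup>\<plusminus>\<^sup>1\<close> occurring before letters \<open>q\<^sup>\<plusminus>\<^sup>1\<close>. Only swapping an adjacent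
  \<open>p\<close> and \<open>q\<close> could change it, so for non-adjacent \<open>p, q\<close> it is an invariant of the group element;
  comparing it on \<open>x y\<close> and \<open>y x\<close> gives the vanishing minors.\<close>

fun cross_count :: "'a \<Rightarrow> 'a \<Rightarrow> ('a \<times> bool) list \<Rightarrow> int" where
  "cross_count p q [] = 0"
| "cross_count p q ((v, b) # w) = (if v = p then (if b then 1 else -1) * word_exp w q else 0) + cross_count p q w"

lemma cross_count_append:
  "cross_count p q (x @ y) = cross_count p q x + cross_count p q y + word_exp x p * word_exp y q"
  by (induction x rule: word_exp.induct) (auto simp: word_exp_append_apply algebra_simps)

lemma cross_count_raag_step:
  assumes "p \<noteq> q" "\<not> E p q" "\<not> E q p" "raag_step V E x y"
  shows "cross_count p q x = cross_count p q y"
  using assms(4)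
proof (cases rule: raag_stepE)
  case (cancel a b v c)
  then show ?thesis using assms(1) by (simp add: cross_count_append word_exp_append_apply)
next
  case (comm a b u v c d)
  then have "\<not> (u = p \<and> v = q)" "\<not> (v = p \<and> u = q)" using assms(2,3) by auto
  then show ?thesis using comm by (auto simp: cross_count_append word_exp_append_apply algebra_simps)
qed

lemma commuting_exp_vec_minor:
  assumes "p \<noteq> q" "\<not> E p q" "\<not> E q p"
    and P: "P \<in> carrier (raag V E)" and Q: "Q \<in> carrier (raag V E)"
    and PQ: "P \<otimes>\<^bsub>raag V E\<^esub> Q = Q \<otimes>\<^bsub>raag V E\<^esub> P"
  shows "exp_vec P p * exp_vec Q q = exp_vec Q p * exp_vec P q"
proof -
  obtain x where x: "x \<in> raag_words V" "P = raag_class V E x" using P by (elim carrier_raagE)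
  obtain y where y: "y \<in> raag_words V" "Q = raag_class V E y" using Q by (elim carrier_raagE)
  have "(x @ y, y @ x) \<in> raag_rel V E"
    using PQ x y by (simp add: raag_mult_class raag_class_eq_iff)
  then have "cross_count p q (x @ y) = cross_count p q (y @ x)"
    unfolding raag_rel_iff
    using equivclp_invariant[of "raag_step V E" "cross_count p q" "x @ y" "y @ x"]
      cross_count_raag_step[OF assms(1-3)] by blast
  then show ?thesis using x y by (simp add: cross_count_append exp_vec_class)
qed

section \<open>Lifts along a surjective simplicial map\<close>

locale surjective_graph_map =
  fixes VL :: "'w set" and EL :: "'w \<Rightarrow> 'w \<Rightarrow> bool"
    and VG :: "'v set" and EG :: "'v \<Rightarrow> 'v \<Rightarrow> bool"
    and \<phi> :: "'w \<Rightarrow> 'v"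
  assumes simplicial: "simplicial_map VL EL VG EG \<phi>" and onto: "\<phi> ` VL = VG"
begin

abbreviation "AL \<equiv> raag VL EL"
abbreviation "AG \<equiv> raag VG EG"
abbreviation "\<Phi> \<equiv> raag_hom VL EL VG EG \<phi>"
abbreviation "FAut_group \<equiv> (AutoGroup AL)\<lparr>carrier := FAut VL EL VG EG \<phi>\<rparr>"
abbreviation "LAut_group \<equiv> (AutoGroup AG)\<lparr>carrier := LAut VL EL VG EG \<phi>\<rparr>"
abbreviation "FD_group \<equiv> (AutoGroup AL)\<lparr>carrier := FD VL EL VG EG \<phi>\<rparr>"

lemma group_AL: "group AL" and group_AG: "group AG"
  by (simp_all add: raag_group)

lemma group_AutoGroup_AL: "group (AutoGroup AL)" and group_AutoGroup_AG: "group (AutoGroup AG)"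
  by (simp_all add: group.AutoGroup raag_group)

lemma \<Phi>_group_hom: "group_hom AL AG \<Phi>"
  using raag_hom_hom[OF simplicial] by (simp add: group_hom_def group_hom_axioms_def raag_group)

lemma \<Phi>_closed: "P \<in> carrier AL \<Longrightarrow> \<Phi> P \<in> carrier AG"
  by (rule raag_hom_closed[OF simplicial])

lemma \<Phi>_onto: "\<Phi> ` carrier AL = carrier AG"
proof
  show "\<Phi> ` carrier AL \<subseteq> carrier AG" using \<Phi>_closed by blast
  show "carrier AG \<subseteq> \<Phi> ` carrier AL"
  proof
    fix Q assume "Q \<in> carrier AG"
    then obtain y where y: "y \<in> raag_words VG" "Q = raag_class VG EG y" by (elim carrier_raagE)
    let ?\<psi> = "inv_into VL \<phi>"
    have \<psi>: "?\<psi> v \<in> VL" "\<phi> (?\<psi> v) = v" if "v \<in> VG" for v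
      using onto that by (auto simp: inv_into_into f_inv_into_f)
    have x: "word_map ?\<psi> y \<in> raag_words VL"
      using y(1) \<psi> by (intro word_map_words) auto
    have "word_map \<phi> (word_map ?\<psi> y) = y"
      using y(1) \<psi> by (simp add: word_map_comp word_map_cong[of y VG "\<phi> \<circ> ?\<psi>" "\<lambda>v. v"])
    then have "\<Phi> (raag_class VL EL (word_map ?\<psi> y)) = Q"
      using y x by (simp add: raag_hom_class[OF simplicial])
    then show "Q \<in> \<Phi> ` carrier AL" using x y(1) raag_class_carrier by blast
  qed
qed

lemma lift_unique:
  assumes "f \<in> auto AG" "f' \<in> auto AG" "is_lift VL EL VG EG \<phi> f F" "is_lift VL EL VG EG \<phi> f' F"
  shows "f = f'"
proof (rule group.auto_eqI[OF group_AG assms(1,2)])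
  fix z assume "z \<in> carrier AG"
  then obtain x where "x \<in> carrier AL" "z = \<Phi> x" using \<Phi>_onto by blast
  then show "f z = f' z" using assms(3,4) by (simp add: is_lift_def)
qed

lemma is_lift_mult:
  assumes F: "F \<in> auto AL" "F' \<in> auto AL" and f: "f \<in> auto AG" "f' \<in> auto AG"
    and "is_lift VL EL VG EG \<phi> f F" "is_lift VL EL VG EG \<phi> f' F'"
  shows "is_lift VL EL VG EG \<phi> (f \<otimes>\<^bsub>AutoGroup AG\<^esub> f') (F \<otimes>\<^bsub>AutoGroup AL\<^esub> F')"
  using assms group.auto_closed[OF group_AL F(2)]
  by (simp add: is_lift_def group.AutoGroup_mult_apply[OF group_AG f] group.AutoGroup_mult_apply[OF group_AL F]
      \<Phi>_closed)

lemma is_lift_inv: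
  assumes F: "F \<in> auto AL" and f: "f \<in> auto AG" and l: "is_lift VL EL VG EG \<phi> f F"
  shows "is_lift VL EL VG EG \<phi> (inv\<^bsub>AutoGroup AG\<^esub> f) (inv\<^bsub>AutoGroup AL\<^esub> F)"
  unfolding is_lift_def
proof
  fix x assume x: "x \<in> carrier AL"
  let ?y = "(inv\<^bsub>AutoGroup AL\<^esub> F) x"
  have y: "?y \<in> carrier AL"
    by (rule group.auto_closed[OF group_AL group.AutoGroup_inv_closed[OF group_AL F] x])
  have "f (\<Phi> ?y) = \<Phi> x"
    using l y group.AutoGroup_inv_apply_right[OF group_AL F x] by (simp add: is_lift_def)
  then show "(inv\<^bsub>AutoGroup AG\<^esub> f) (\<Phi> x) = \<Phi> ?y"
    using group.AutoGroup_inv_apply_left[OF group_AG f \<Phi>_closed[OF y]] by simp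
qed

lemma is_lift_id: "is_lift VL EL VG EG \<phi> (\<lambda>x\<in>carrier AG. x) (\<lambda>x\<in>carrier AL. x)"
  by (simp add: is_lift_def \<Phi>_closed)

lemma FD_subset_FAut: "FD VL EL VG EG \<phi> \<subseteq> FAut VL EL VG EG \<phi>"
  using group.id_in_auto[OF group_AG] by (auto simp: FD_def FAut_def)

lemma subgroup_FAut: "subgroup (FAut VL EL VG EG \<phi>) (AutoGroup AL)"
proof (rule group.subgroupI[OF group_AutoGroup_AL])
  show "FAut VL EL VG EG \<phi> \<subseteq> carrier (AutoGroup AL)" by (auto simp: FAut_def)
  show "FAut VL EL VG EG \<phi> \<noteq> {}"
    using is_lift_id group.id_in_auto[OF group_AL] group.id_in_auto[OF group_AG]
    by (auto simp: FAut_def)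
next
  fix F assume "F \<in> FAut VL EL VG EG \<phi>"
  then obtain f where "F \<in> auto AL" "f \<in> auto AG" "is_lift VL EL VG EG \<phi> f F" by (auto simp: FAut_def)
  then show "inv\<^bsub>AutoGroup AL\<^esub> F \<in> FAut VL EL VG EG \<phi>"
    using is_lift_inv group.AutoGroup_inv_closed[OF group_AL] group.AutoGroup_inv_closed[OF group_AG]
    unfolding FAut_def by blast
next
  fix F F' assume "F \<in> FAut VL EL VG EG \<phi>" "F' \<in> FAut VL EL VG EG \<phi>"
  then obtain f f' where "F \<in> auto AL" "f \<in> auto AG" "is_lift VL EL VG EG \<phi> f F"
    "F' \<in> auto AL" "f' \<in> auto AG" "is_lift VL EL VG EG \<phi> f' F'"
    by (auto simp: FAut_def)
  then show "F \<otimes>\<^bsub>AutoGroup AL\<^esub> F' \<in> FAut VL EL VG EG \<phi>"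
    using is_lift_mult group.AutoGroup_m_closed[OF group_AL] group.AutoGroup_m_closed[OF group_AG]
    unfolding FAut_def by blast
qed

lemma subgroup_LAut: "subgroup (LAut VL EL VG EG \<phi>) (AutoGroup AG)"
proof (rule group.subgroupI[OF group_AutoGroup_AG])
  show "LAut VL EL VG EG \<phi> \<subseteq> carrier (AutoGroup AG)" by (auto simp: LAut_def)
  show "LAut VL EL VG EG \<phi> \<noteq> {}"
    using is_lift_id group.id_in_auto[OF group_AL] group.id_in_auto[OF group_AG]
    by (auto simp: LAut_def)
next
  fix f assume "f \<in> LAut VL EL VG EG \<phi>"
  then obtain F where "F \<in> auto AL" "f \<in> auto AG" "is_lift VL EL VG EG \<phi> f F" by (auto simp: LAut_def)
  then show "inv\<^bsub>AutoGroup AG\<^esub> f \<in> LAut VL EL VG EG \<phi>"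
    using is_lift_inv group.AutoGroup_inv_closed[OF group_AL] group.AutoGroup_inv_closed[OF group_AG]
    unfolding LAut_def by blast
next
  fix f f' assume "f \<in> LAut VL EL VG EG \<phi>" "f' \<in> LAut VL EL VG EG \<phi>"
  then obtain F F' where "F \<in> auto AL" "f \<in> auto AG" "is_lift VL EL VG EG \<phi> f F"
    "F' \<in> auto AL" "f' \<in> auto AG" "is_lift VL EL VG EG \<phi> f' F'"
    by (auto simp: LAut_def)
  then show "f \<otimes>\<^bsub>AutoGroup AG\<^esub> f' \<in> LAut VL EL VG EG \<phi>"
    using is_lift_mult group.AutoGroup_m_closed[OF group_AL] group.AutoGroup_m_closed[OF group_AG]
    unfolding LAut_def by blast
qed

lemma lifted_aut_lifts:
  assumes "F \<in> FAut VL EL VG EG \<phi>"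
  shows "lifted_aut VL EL VG EG \<phi> F \<in> auto AG \<and> is_lift VL EL VG EG \<phi> (lifted_aut VL EL VG EG \<phi> F) F"
proof -
  obtain f where "f \<in> auto AG" "is_lift VL EL VG EG \<phi> f F" using assms by (auto simp: FAut_def)
  then have "\<exists>!f. f \<in> auto AG \<and> is_lift VL EL VG EG \<phi> f F" using lift_unique by blast
  then show ?thesis unfolding lifted_aut_def by (rule theI')
qed

lemma lifted_aut_eq:
  assumes "F \<in> auto AL" "f \<in> auto AG" "is_lift VL EL VG EG \<phi> f F"
  shows "lifted_aut VL EL VG EG \<phi> F = f"
  using assms lifted_aut_lifts[of F] lift_unique by (auto simp: FAut_def)

lemma lifted_aut_LAut: "F \<in> FAut VL EL VG EG \<phi> \<Longrightarrow> lifted_aut VL EL VG EG \<phi> F \<in> LAut VL EL VG EG \<phi>"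
  using lifted_aut_lifts[of F] unfolding LAut_def FAut_def by blast

lemma lifted_aut_mult:
  assumes F: "F \<in> FAut VL EL VG EG \<phi>" and F': "F' \<in> FAut VL EL VG EG \<phi>"
  shows "lifted_aut VL EL VG EG \<phi> (F \<otimes>\<^bsub>AutoGroup AL\<^esub> F') =
    lifted_aut VL EL VG EG \<phi> F \<otimes>\<^bsub>AutoGroup AG\<^esub> lifted_aut VL EL VG EG \<phi> F'"
proof (rule lifted_aut_eq)
  have a: "F \<in> auto AL" "F' \<in> auto AL" using F F' by (simp_all add: FAut_def)
  note l = lifted_aut_lifts[OF F] lifted_aut_lifts[OF F']
  show "F \<otimes>\<^bsub>AutoGroup AL\<^esub> F' \<in> auto AL" by (rule group.AutoGroup_m_closed[OF group_AL a])
  show "lifted_aut VL EL VG EG \<phi> F \<otimes>\<^bsub>AutoGroup AG\<^esub> lifted_aut VL EL VG EG \<phi> F' \<in> auto AG"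
    using l by (simp add: group.AutoGroup_m_closed[OF group_AG])
  show "is_lift VL EL VG EG \<phi> (lifted_aut VL EL VG EG \<phi> F \<otimes>\<^bsub>AutoGroup AG\<^esub> lifted_aut VL EL VG EG \<phi> F')
      (F \<otimes>\<^bsub>AutoGroup AL\<^esub> F')"
    using l by (simp add: is_lift_mult[OF a])
qed

lemma lifted_aut_inv:
  assumes F: "F \<in> FAut VL EL VG EG \<phi>"
  shows "lifted_aut VL EL VG EG \<phi> (inv\<^bsub>AutoGroup AL\<^esub> F) = inv\<^bsub>AutoGroup AG\<^esub> lifted_aut VL EL VG EG \<phi> F"
proof -
  have a: "F \<in> auto AL" using F by (simp add: FAut_def)
  note l = lifted_aut_lifts[OF F]
  show ?thesis
    using l by (intro lifted_aut_eq group.AutoGroup_inv_closed[OF group_AL a]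
        group.AutoGroup_inv_closed[OF group_AG] is_lift_inv[OF a]) auto
qed

lemma lifted_aut_onto: "lifted_aut VL EL VG EG \<phi> ` FAut VL EL VG EG \<phi> = LAut VL EL VG EG \<phi>"
proof
  show "lifted_aut VL EL VG EG \<phi> ` FAut VL EL VG EG \<phi> \<subseteq> LAut VL EL VG EG \<phi>"
    using lifted_aut_LAut by blast
  show "LAut VL EL VG EG \<phi> \<subseteq> lifted_aut VL EL VG EG \<phi> ` FAut VL EL VG EG \<phi>"
  proof
    fix f assume "f \<in> LAut VL EL VG EG \<phi>"
    then obtain F where F: "F \<in> auto AL" "f \<in> auto AG" "is_lift VL EL VG EG \<phi> f F"
      by (auto simp: LAut_def)
    then have "F \<in> FAut VL EL VG EG \<phi>" by (auto simp: FAut_def)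
    moreover have "lifted_aut VL EL VG EG \<phi> F = f" by (rule lifted_aut_eq[OF F])
    ultimately show "f \<in> lifted_aut VL EL VG EG \<phi> ` FAut VL EL VG EG \<phi>" by blast
  qed
qed

lemma lifted_aut_epi: "lifted_aut VL EL VG EG \<phi> \<in> epi FAut_group LAut_group"
proof -
  have "lifted_aut VL EL VG EG \<phi> \<in> hom FAut_group LAut_group"
    by (rule homI) (simp_all add: lifted_aut_LAut lifted_aut_mult)
  then show ?thesis using lifted_aut_onto by (simp add: epi_def)
qed

lemma kernel_lifted_aut:
  "kernel FAut_group LAut_group (lifted_aut VL EL VG EG \<phi>) = FD VL EL VG EG \<phi>"
proof -
  have iff: "lifted_aut VL EL VG EG \<phi> F = (\<lambda>x\<in>carrier AG. x) \<longleftrightarrow> F \<in> FD VL EL VG EG \<phi>"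
    if F: "F \<in> FAut VL EL VG EG \<phi>" for F
  proof
    assume "lifted_aut VL EL VG EG \<phi> F = (\<lambda>x\<in>carrier AG. x)"
    then show "F \<in> FD VL EL VG EG \<phi>" using lifted_aut_lifts[OF F] F by (simp add: FD_def FAut_def)
  next
    assume "F \<in> FD VL EL VG EG \<phi>"
    then show "lifted_aut VL EL VG EG \<phi> F = (\<lambda>x\<in>carrier AG. x)"
      using lifted_aut_eq group.id_in_auto[OF group_AG] by (simp add: FD_def)
  qed
  have "kernel FAut_group LAut_group (lifted_aut VL EL VG EG \<phi>) =
      {F \<in> FAut VL EL VG EG \<phi>. lifted_aut VL EL VG EG \<phi> F = (\<lambda>x\<in>carrier AG. x)}"
    by (simp add: kernel_def group.AutoGroup_one[OF group_AG])
  also have "\<dots> = FD VL EL VG EG \<phi>" using iff FD_subset_FAut by blast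
  finally show ?thesis .
qed

lemma \<Phi>_derived: "d \<in> derived AL (carrier AL) \<Longrightarrow> \<Phi> d \<in> derived AG (carrier AG)"
  using group_hom.derived_img[OF \<Phi>_group_hom, of "carrier AL"] \<Phi>_onto by auto

lemma lifted_aut_IA:
  assumes F: "F \<in> FAut VL EL VG EG \<phi>" "F \<in> IA AL"
  shows "lifted_aut VL EL VG EG \<phi> F \<in> IA AG"
  unfolding IA_def
proof (intro CollectI conjI ballI)
  interpret group_hom AL AG \<Phi> by (rule \<Phi>_group_hom)
  let ?f = "lifted_aut VL EL VG EG \<phi> F"
  show "?f \<in> auto AG" using lifted_aut_lifts[OF F(1)] by blast
  fix z assume "z \<in> carrier AG"
  then obtain x where x: "x \<in> carrier AL" "z = \<Phi> x" using \<Phi>_onto by blast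
  have Fx: "F x \<in> carrier AL"
    using F(1) x(1) group.auto_closed[OF group_AL] by (simp add: FAut_def)
  have "F x \<otimes>\<^bsub>AL\<^esub> inv\<^bsub>AL\<^esub> x \<in> derived AL (carrier AL)" using F(2) x(1) by (simp add: IA_def)
  then have "\<Phi> (F x \<otimes>\<^bsub>AL\<^esub> inv\<^bsub>AL\<^esub> x) \<in> derived AG (carrier AG)" by (rule \<Phi>_derived)
  moreover have "\<Phi> (F x \<otimes>\<^bsub>AL\<^esub> inv\<^bsub>AL\<^esub> x) = ?f z \<otimes>\<^bsub>AG\<^esub> inv\<^bsub>AG\<^esub> z"
    using Fx x lifted_aut_lifts[OF F(1)] by (simp add: is_lift_def)
  ultimately show "?f z \<otimes>\<^bsub>AG\<^esub> inv\<^bsub>AG\<^esub> z \<in> derived AG (carrier AG)" by simp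
qed

lemma group_FAut_group: "group FAut_group"
  by (rule group.subgroup_imp_group[OF group_AutoGroup_AL subgroup_FAut])

lemma group_LAut_group: "group LAut_group"
  by (rule group.subgroup_imp_group[OF group_AutoGroup_AG subgroup_LAut])

lemma group_hom_lifted_aut: "group_hom FAut_group LAut_group (lifted_aut VL EL VG EG \<phi>)"
  using lifted_aut_epi group_FAut_group group_LAut_group
  by (simp add: group_hom_def group_hom_axioms_def epi_def)

lemma subgroup_FD_FAut: "subgroup (FD VL EL VG EG \<phi>) FAut_group"
  using group_hom.subgroup_kernel[OF group_hom_lifted_aut] by (simp add: kernel_lifted_aut)

lemma mon_FD_FAut: "(\<lambda>F. F) \<in> mon FD_group FAut_group"
  using FD_subset_FAut by (auto simp: mon_def intro!: homI)

lemma normal_FAut_IA: "FAut VL EL VG EG \<phi> \<inter> IA AL \<lhd> FAut_group"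
  using group.normal_Int_subgroup[OF group_AutoGroup_AL subgroup_FAut group.IA_normal[OF group_AL]]
  by (simp add: Int_commute)

lemma normal_LAut_IA: "LAut VL EL VG EG \<phi> \<inter> IA AG \<lhd> LAut_group"
  using group.normal_Int_subgroup[OF group_AutoGroup_AG subgroup_LAut group.IA_normal[OF group_AG]]
  by (simp add: Int_commute)

lemma lifted_aut_image_IA:
  "lifted_aut VL EL VG EG \<phi> ` (FAut VL EL VG EG \<phi> \<inter> IA AL) \<subseteq> LAut VL EL VG EG \<phi> \<inter> IA AG"
  using lifted_aut_IA lifted_aut_LAut by blast

end

locale regular_cover =
  fixes VL :: "'w set" and EL :: "'w \<Rightarrow> 'w \<Rightarrow> bool"
    and VG :: "'v set" and EG :: "'v \<Rightarrow> 'v \<Rightarrow> bool"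
    and \<phi> :: "'w \<Rightarrow> 'v"
  assumes simple_L: "simple_graph VL EL" and simple_G: "simple_graph VG EG"
    and no_isolated_L: "no_isolated_vertices VL EL"
    and regular: "regular_covering VL EL VG EG \<phi>"
begin

lemma covering: "covering_map VL EL VG EG \<phi>"
  using regular by (simp add: regular_covering_def)

sublocale surjective_graph_map
  using covering simple_L by unfold_locales (auto simp: covering_map_def simplicial_map_def simple_graph_def)

lemma finite_VL: "finite VL" using simple_L by (simp add: simple_graph_def)
lemma EL_in_VL: "EL u v \<Longrightarrow> u \<in> VL \<and> v \<in> VL" using simple_L by (simp add: simple_graph_def)
lemma EL_sym: "EL u v \<Longrightarrow> EL v u" using simple_L by (simp add: simple_graph_def)

lemma edge_image_neq: "EL u v \<Longrightarrow> \<phi> u \<noteq> \<phi> v"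
  using covering simple_G by (fastforce simp: covering_map_def simple_graph_def)

lemma neighbour_in_fibre_unique:
  assumes "y \<in> VL" "EL y x" "EL y x'" "\<phi> x = \<phi> x'"
  shows "x = x'"
  using covering assms by (auto simp: covering_map_def bij_betw_def inj_on_def neighbours_def)

abbreviation "fibre s \<equiv> {x\<in>VL. \<phi> x = s}"

text \<open>For \<open>a, b\<close> (later the exponent vectors of the images of two adjacent generators) the
  quantity \<open>D x y = a x * b y - a y * b x\<close> vanishes unless \<open>x, y\<close> are adjacent, and a vertex
  has at most one neighbour in each fibre, so a fibre sum of \<open>D \<cdot> y\<close> reduces to a single term.\<close>

lemma fibre_support:
  fixes a b :: "'w \<Rightarrow> int"
  assumes uv: "EL u v"
    and sum_a: "\<forall>s\<in>VG. (\<Sum>x\<in>fibre s. a x) = (if s = \<phi> u then 1 else 0)"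
    and sum_b: "\<forall>s\<in>VG. (\<Sum>x\<in>fibre s. b x) = (if s = \<phi> v then 1 else 0)"
    and minors: "\<forall>x\<in>VL. \<forall>y\<in>VL. x \<noteq> y \<longrightarrow> \<not> EL x y \<longrightarrow> a x * b y = a y * b x"
    and y: "y \<in> VL" "a y \<noteq> 0"
  shows "\<phi> y = \<phi> u"
proof -
  define D where "D x y = a x * b y - a y * b x" for x y
  have D_edge: "EL x y" if "x \<in> VL" "y \<in> VL" "D x y \<noteq> 0" for x y
    using that minors by (cases "x = y") (auto simp: D_def)
  have D_sum: "(\<Sum>x\<in>fibre s. D x y) = (if s = \<phi> u then 1 else 0) * b y - a y * (if s = \<phi> v then 1 else 0)"
    if "s \<in> VG" for s y
  proof -
    have "(\<Sum>x\<in>fibre s. D x y) = (\<Sum>x\<in>fibre s. a x) * b y - a y * (\<Sum>x\<in>fibre s. b x)"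
      by (simp add: D_def sum_subtractf sum_distrib_right sum_distrib_left)
    then show ?thesis using sum_a sum_b that by simp
  qed
  have D_single: "(\<Sum>x'\<in>fibre s. D x' y) = D x y" if "x \<in> fibre s" "y \<in> VL" "D x y \<noteq> 0" for x y s
  proof -
    have "D x' y = 0" if "x' \<in> fibre s - {x}" for x'
      using that \<open>x \<in> fibre s\<close> \<open>y \<in> VL\<close> D_edge[of x y] D_edge[of x' y] \<open>D x y \<noteq> 0\<close>
        neighbour_in_fibre_unique[of y x' x] EL_sym by fastforce
    then show ?thesis using that(1) finite_VL by (simp add: sum.remove sum.neutral)
  qed
  have uG: "\<phi> u \<noteq> \<phi> v" "\<phi> v \<in> VG" using edge_image_neq[OF uv] onto EL_in_VL[OF uv] by auto
  have "(\<Sum>x\<in>fibre (\<phi> v). D x y) = - a y" using D_sum[OF uG(2)] uG(1) by simp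
  then obtain x where x: "x \<in> fibre (\<phi> v)" "D x y \<noteq> 0"
    using y(2) by (metis (no_types, lifting) neg_equal_0_iff_equal sum.neutral)
  have xy: "EL x y" using D_edge x y by auto
  have Dyx: "D y x \<noteq> 0" using x(2) by (simp add: D_def algebra_simps)
  have "(\<Sum>z\<in>fibre (\<phi> y). D z x) = D y x" using D_single[of y "\<phi> y" x] y x Dyx by auto
  moreover have "\<phi> y \<in> VG" using onto y(1) by blast
  ultimately have "(if \<phi> y = \<phi> u then 1 else 0) * b x - a x * (if \<phi> y = \<phi> v then 1 else 0) \<noteq> 0"
    using D_sum[of "\<phi> y" x] Dyx by simp
  moreover have "\<phi> y \<noteq> \<phi> v" using edge_image_neq[OF xy] x by auto
  ultimately show ?thesis by (auto split: if_splits)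
qed

lemma fibre_indicator:
  fixes a b :: "'w \<Rightarrow> int"
  assumes uv: "EL u v"
    and sum_a: "\<forall>s\<in>VG. (\<Sum>x\<in>fibre s. a x) = (if s = \<phi> u then 1 else 0)"
    and sum_b: "\<forall>s\<in>VG. (\<Sum>x\<in>fibre s. b x) = (if s = \<phi> v then 1 else 0)"
    and minors: "\<forall>x\<in>VL. \<forall>y\<in>VL. x \<noteq> y \<longrightarrow> \<not> EL x y \<longrightarrow> a x * b y = a y * b x"
    and outside: "\<forall>z. z \<notin> VL \<longrightarrow> a z = 0"
  shows "\<exists>w\<in>VL. \<phi> w = \<phi> u \<and> a = (\<lambda>z. if z = w then 1 else 0)"
proof -
  have supp_a: "\<phi> y = \<phi> u" if "y \<in> VL" "a y \<noteq> 0" for y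
    using fibre_support[OF uv sum_a sum_b minors that] .
  have supp_b: "\<phi> y = \<phi> v" if "y \<in> VL" "b y \<noteq> 0" for y
    using fibre_support[OF EL_sym[OF uv] sum_b sum_a _ that] minors by (metis mult.commute)
  have uG: "\<phi> u \<noteq> \<phi> v" "\<phi> u \<in> VG" "\<phi> v \<in> VG" using edge_image_neq[OF uv] onto EL_in_VL[OF uv] by auto
  obtain y where y: "y \<in> fibre (\<phi> v)" "b y \<noteq> 0"
    using sum_b uG(3) by (metis (no_types, lifting) one_neq_zero sum.neutral)
  have adjacent: "EL x y" if x: "x \<in> VL" "a x \<noteq> 0" for x
  proof (rule ccontr)
    assume "\<not> EL x y"
    have \<phi>x: "\<phi> x = \<phi> u" and \<phi>y: "\<phi> y = \<phi> v" using supp_a x y by auto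
    have "x \<noteq> y" using \<phi>x \<phi>y uG(1) by auto
    moreover have "a y = 0" using supp_a[of y] y(1) \<phi>y uG(1) by auto
    moreover have "b x = 0" using supp_b[of x] x(1) \<phi>x uG(1) by auto
    ultimately show False using minors x y \<open>\<not> EL x y\<close> by auto
  qed
  have unique: "x = x'" if "x \<in> VL" "a x \<noteq> 0" "x' \<in> VL" "a x' \<noteq> 0" for x x'
    using neighbour_in_fibre_unique[of y x x'] adjacent that y EL_sym supp_a by auto
  obtain w where w: "w \<in> fibre (\<phi> u)" "a w \<noteq> 0"
    using sum_a uG(2) by (metis (no_types, lifting) one_neq_zero sum.neutral)
  have zero: "a z = 0" if "z \<noteq> w" for z
    using unique[of z w] w outside that by (cases "z \<in> VL") auto
  have "(\<Sum>x\<in>fibre (\<phi> u). a x) = a w"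
    using w finite_VL zero by (simp add: sum.remove[of _ w] sum.neutral)
  then have "a = (\<lambda>z. if z = w then 1 else 0)" using sum_a uG(2) zero by auto
  then show ?thesis using w by auto
qed

section \<open>Lifts of IA-automorphisms\<close>

abbreviation "gen u \<equiv> raag_class VL EL [(u, True)]"

lemma gen_carrier: "u \<in> VL \<Longrightarrow> gen u \<in> carrier AL"
  by (simp add: raag_class_carrier)

lemma exp_vec_gen: "u \<in> VL \<Longrightarrow> exp_vec (gen u) = (\<lambda>z. if z = u then 1 else 0)"
  by (simp add: exp_vec_class fun_eq_iff)

lemma gen_commute: "EL u v \<Longrightarrow> gen u \<otimes>\<^bsub>AL\<^esub> gen v = gen v \<otimes>\<^bsub>AL\<^esub> gen u"
  using raag_step_commI[of EL u v "[]" "[]" VL True True] EL_in_VL[of u v]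
  by (simp add: raag_mult_class raag_class_eq_iff raag_rel_step)

lemma IA_lift_fibre_sums:
  assumes F: "F \<in> FAut VL EL VG EG \<phi>" and f: "lifted_aut VL EL VG EG \<phi> F \<in> IA AG" and u: "u \<in> VL"
  shows "\<forall>s\<in>VG. (\<Sum>x\<in>fibre s. exp_vec (F (gen u)) x) = (if s = \<phi> u then 1 else 0)"
proof
  fix s assume "s \<in> VG"
  have Fu: "F (gen u) \<in> carrier AL"
    using F gen_carrier[OF u] group.auto_closed[OF group_AL] by (simp add: FAut_def)
  have "(\<Sum>x\<in>fibre s. exp_vec (F (gen u)) x) = exp_vec (\<Phi> (F (gen u))) s"
    using exp_vec_raag_hom[OF finite_VL simplicial Fu] by simp
  also have "\<Phi> (F (gen u)) = lifted_aut VL EL VG EG \<phi> F (\<Phi> (gen u))"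
    using lifted_aut_lifts[OF F] gen_carrier[OF u] by (simp add: is_lift_def)
  also have "exp_vec (lifted_aut VL EL VG EG \<phi> F (\<Phi> (gen u))) = exp_vec (\<Phi> (gen u))"
    using f \<Phi>_closed[OF gen_carrier[OF u]] by (simp add: IA_raag_iff)
  also have "\<Phi> (gen u) = raag_class VG EG [(\<phi> u, True)]"
    using u by (simp add: raag_hom_class[OF simplicial])
  finally show "(\<Sum>x\<in>fibre s. exp_vec (F (gen u)) x) = (if s = \<phi> u then 1 else 0)"
    using u onto by (auto simp: exp_vec_class)
qed

lemma aut_gen_minors:
  assumes F: "F \<in> auto AL" and uv: "EL u v"
  shows "\<forall>x\<in>VL. \<forall>y\<in>VL. x \<noteq> y \<longrightarrow> \<not> EL x y \<longrightarrow>
           exp_vec (F (gen u)) x * exp_vec (F (gen v)) y = exp_vec (F (gen u)) y * exp_vec (F (gen v)) x"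
proof (intro ballI impI)
  fix x y assume "x \<in> VL" "y \<in> VL" "x \<noteq> y" "\<not> EL x y"
  have g: "gen u \<in> carrier AL" "gen v \<in> carrier AL" using EL_in_VL[OF uv] gen_carrier by auto
  have Fg: "F (gen u) \<in> carrier AL" "F (gen v) \<in> carrier AL"
    using group.auto_closed[OF group_AL F] g by auto
  have "F (gen u) \<otimes>\<^bsub>AL\<^esub> F (gen v) = F (gen u \<otimes>\<^bsub>AL\<^esub> gen v)"
    using group.auto_mult_hom[OF group_AL F g] by simp
  also have "\<dots> = F (gen v \<otimes>\<^bsub>AL\<^esub> gen u)" using gen_commute[OF uv] by simp
  also have "\<dots> = F (gen v) \<otimes>\<^bsub>AL\<^esub> F (gen u)" using group.auto_mult_hom[OF group_AL F g(2,1)] by simp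
  finally have commute: "F (gen u) \<otimes>\<^bsub>AL\<^esub> F (gen v) = F (gen v) \<otimes>\<^bsub>AL\<^esub> F (gen u)" .
  have "\<not> EL y x" using \<open>\<not> EL x y\<close> EL_sym by blast
  from commuting_exp_vec_minor[OF \<open>x \<noteq> y\<close> \<open>\<not> EL x y\<close> this Fg commute]
  show "exp_vec (F (gen u)) x * exp_vec (F (gen v)) y = exp_vec (F (gen u)) y * exp_vec (F (gen v)) x"
    by (simp add: mult.commute)
qed

lemma IA_lift_gen_exp_vec:
  assumes F: "F \<in> FAut VL EL VG EG \<phi>" and f: "lifted_aut VL EL VG EG \<phi> F \<in> IA AG" and u: "u \<in> VL"
  shows "\<exists>w. w \<in> VL \<and> \<phi> w = \<phi> u \<and> exp_vec (F (gen u)) = (\<lambda>z. if z = w then 1 else 0)"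
proof -
  have Fa: "F \<in> auto AL" using F by (simp add: FAut_def)
  obtain v where uv: "EL u v" using no_isolated_L u by (auto simp: no_isolated_vertices_def)
  have v: "v \<in> VL" using EL_in_VL[OF uv] by simp
  have "\<forall>z. z \<notin> VL \<longrightarrow> exp_vec (F (gen u)) z = 0"
    using exp_vec_outside[OF group.auto_closed[OF group_AL Fa gen_carrier[OF u]]] by blast
  from fibre_indicator[OF uv IA_lift_fibre_sums[OF F f u] IA_lift_fibre_sums[OF F f v]
      aut_gen_minors[OF Fa uv] this]
  show ?thesis by blast
qed

lemma IA_lift_permutes_generators:
  assumes F: "F \<in> FAut VL EL VG EG \<phi>" and f: "lifted_aut VL EL VG EG \<phi> F \<in> IA AG"
  obtains \<mu> where "\<And>u. u \<in> VL \<Longrightarrow> \<mu> u \<in> VL \<and> \<phi> (\<mu> u) = \<phi> u"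
    and "\<And>u. u \<in> VL \<Longrightarrow> exp_vec (F (gen u)) = (\<lambda>z. if z = \<mu> u then 1 else 0)"
    and "\<And>u v. EL u v \<Longrightarrow> EL (\<mu> u) (\<mu> v)"
proof -
  have Fa: "F \<in> auto AL" using F by (simp add: FAut_def)
  have "\<forall>u\<in>VL. \<exists>w. w \<in> VL \<and> \<phi> w = \<phi> u \<and> exp_vec (F (gen u)) = (\<lambda>z. if z = w then 1 else 0)"
    using IA_lift_gen_exp_vec[OF F f] by blast
  from bchoice[OF this] obtain \<mu> where \<mu>: "\<forall>u\<in>VL. \<mu> u \<in> VL \<and> \<phi> (\<mu> u) = \<phi> u \<and>
      exp_vec (F (gen u)) = (\<lambda>z. if z = \<mu> u then 1 else 0)"
    by blast
  show ?thesis
  proof (rule that)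
    fix u assume "u \<in> VL"
    then show "\<mu> u \<in> VL \<and> \<phi> (\<mu> u) = \<phi> u" "exp_vec (F (gen u)) = (\<lambda>z. if z = \<mu> u then 1 else 0)"
      using \<mu> by auto
  next
    fix u v assume uv: "EL u v"
    show "EL (\<mu> u) (\<mu> v)"
    proof (rule ccontr)
      assume ne: "\<not> EL (\<mu> u) (\<mu> v)"
      have u: "u \<in> VL" and v: "v \<in> VL" using EL_in_VL[OF uv] by auto
      have \<mu>u: "\<mu> u \<in> VL" "\<phi> (\<mu> u) = \<phi> u" and \<mu>v: "\<mu> v \<in> VL" "\<phi> (\<mu> v) = \<phi> v"
        using \<mu> u v by auto
      have neq: "\<mu> u \<noteq> \<mu> v" using \<mu>u \<mu>v edge_image_neq[OF uv] by auto
      have "exp_vec (F (gen u)) (\<mu> u) * exp_vec (F (gen v)) (\<mu> v) =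
          exp_vec (F (gen u)) (\<mu> v) * exp_vec (F (gen v)) (\<mu> u)"
        using aut_gen_minors[OF Fa uv] \<mu>u(1) \<mu>v(1) neq ne by blast
      then show False using \<mu> u v neq by simp
    qed
  qed
qed

lemma deck_simplicial: "\<mu> \<in> deck_graph VL EL \<phi> \<Longrightarrow> simplicial_map VL EL VL EL \<mu>"
  using graph_aut_simplicial[OF simple_L] by (simp add: deck_graph_def)

lemma deck_auto: "\<mu> \<in> deck_graph VL EL \<phi> \<Longrightarrow> raag_hom VL EL VL EL \<mu> \<in> auto AL"
  using raag_hom_graph_aut[OF simple_L] by (simp add: deck_graph_def)

lemma deck_comp:
  assumes "\<mu> \<in> deck_graph VL EL \<phi>" "\<nu> \<in> deck_graph VL EL \<phi>"
  shows "\<mu> \<circ> \<nu> \<in> deck_graph VL EL \<phi>"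
proof -
  have b: "bij_betw \<mu> VL VL" "bij_betw \<nu> VL VL" using assms by (simp_all add: deck_graph_def graph_aut_def)
  have "\<nu> u \<in> VL" if "u \<in> VL" for u using bij_betwE[OF b(2)] that by blast
  then show ?thesis using assms bij_betw_trans[OF b(2,1)] by (simp add: deck_graph_def graph_aut_def)
qed

lemma deck_inv:
  assumes "\<mu> \<in> deck_graph VL EL \<phi>"
  shows "inv_into VL \<mu> \<in> deck_graph VL EL \<phi>"
proof -
  have b: "bij_betw \<mu> VL VL" using assms by (simp add: deck_graph_def graph_aut_def)
  have "\<phi> (inv_into VL \<mu> u) = \<phi> u" if "u \<in> VL" for u
  proof -
    have "inv_into VL \<mu> u \<in> VL" using bij_betwE[OF bij_betw_inv_into[OF b]] that by blast
    then have "\<phi> (\<mu> (inv_into VL \<mu> u)) = \<phi> (inv_into VL \<mu> u)" using assms by (simp add: deck_graph_def)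
    then show ?thesis using bij_betw_inv_into_right[OF b that] by simp
  qed
  moreover have "graph_aut VL EL (inv_into VL \<mu>)"
    using assms by (intro graph_aut_inv) (simp add: deck_graph_def)
  ultimately show ?thesis by (simp add: deck_graph_def)
qed

lemma deck_mult:
  assumes "\<mu> \<in> deck_graph VL EL \<phi>" "\<nu> \<in> deck_graph VL EL \<phi>"
  shows "raag_hom VL EL VL EL \<mu> \<otimes>\<^bsub>AutoGroup AL\<^esub> raag_hom VL EL VL EL \<nu> = raag_hom VL EL VL EL (\<mu> \<circ> \<nu>)"
proof (rule group.auto_eqI[OF group_AL])
  show "raag_hom VL EL VL EL \<mu> \<otimes>\<^bsub>AutoGroup AL\<^esub> raag_hom VL EL VL EL \<nu> \<in> auto AL"
    using assms by (simp add: deck_auto group.AutoGroup_m_closed[OF group_AL])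
  show "raag_hom VL EL VL EL (\<mu> \<circ> \<nu>) \<in> auto AL" using assms by (simp add: deck_auto deck_comp)
  fix P assume "P \<in> carrier AL"
  then show "(raag_hom VL EL VL EL \<mu> \<otimes>\<^bsub>AutoGroup AL\<^esub> raag_hom VL EL VL EL \<nu>) P = raag_hom VL EL VL EL (\<mu> \<circ> \<nu>) P"
    using assms by (simp add: group.AutoGroup_mult_apply[OF group_AL] deck_auto raag_hom_comp deck_simplicial)
qed

lemma subgroup_Deck: "subgroup (Deck VL EL \<phi>) (AutoGroup AL)"
proof (rule group.subgroupI[OF group_AutoGroup_AL])
  show "Deck VL EL \<phi> \<subseteq> carrier (AutoGroup AL)" using deck_auto by (auto simp: Deck_def)
  have "(\<lambda>v. v) \<in> deck_graph VL EL \<phi>" by (simp add: deck_graph_def graph_aut_def bij_betw_def)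
  then show "Deck VL EL \<phi> \<noteq> {}" by (auto simp: Deck_def)
next
  fix D assume "D \<in> Deck VL EL \<phi>"
  then obtain \<mu> where \<mu>: "\<mu> \<in> deck_graph VL EL \<phi>" "D = raag_hom VL EL VL EL \<mu>" by (auto simp: Deck_def)
  let ?\<nu> = "inv_into VL \<mu>"
  have "raag_hom VL EL VL EL ?\<nu> \<otimes>\<^bsub>AutoGroup AL\<^esub> D = raag_hom VL EL VL EL (?\<nu> \<circ> \<mu>)"
    using \<mu> by (simp add: deck_mult deck_inv)
  also have "\<dots> = \<one>\<^bsub>AutoGroup AL\<^esub>"
    using \<mu>(1) bij_betw_inv_into_left[of \<mu> VL VL]
    by (simp add: raag_hom_id_on group.AutoGroup_one[OF group_AL] deck_graph_def graph_aut_def)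
  finally have "inv\<^bsub>AutoGroup AL\<^esub> D = raag_hom VL EL VL EL ?\<nu>"
    using \<mu> group.inv_equality[OF group_AutoGroup_AL] by (simp add: deck_auto deck_inv)
  then show "inv\<^bsub>AutoGroup AL\<^esub> D \<in> Deck VL EL \<phi>" using \<mu>(1) deck_inv by (auto simp: Deck_def)
next
  fix D D' assume "D \<in> Deck VL EL \<phi>" "D' \<in> Deck VL EL \<phi>"
  then show "D \<otimes>\<^bsub>AutoGroup AL\<^esub> D' \<in> Deck VL EL \<phi>"
    using deck_mult deck_comp by (auto simp: Deck_def)
qed

lemma Deck_subset_FD: "Deck VL EL \<phi> \<subseteq> FD VL EL VG EG \<phi>"
proof
  fix D assume "D \<in> Deck VL EL \<phi>"
  then obtain \<mu> where \<mu>: "\<mu> \<in> deck_graph VL EL \<phi>" "D = raag_hom VL EL VL EL \<mu>" by (auto simp: Deck_def)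
  have "\<Phi> (raag_hom VL EL VL EL \<mu> x) = \<Phi> x" if "x \<in> carrier AL" for x
  proof -
    have "\<Phi> (raag_hom VL EL VL EL \<mu> x) = raag_hom VL EL VG EG (\<phi> \<circ> \<mu>) x"
      by (rule raag_hom_comp[OF deck_simplicial[OF \<mu>(1)] simplicial that])
    also have "raag_hom VL EL VG EG (\<phi> \<circ> \<mu>) = \<Phi>"
      using \<mu>(1) by (intro raag_hom_cong) (simp add: deck_graph_def)
    finally show ?thesis .
  qed
  then show "D \<in> FD VL EL VG EG \<phi>"
    using \<mu> deck_auto \<Phi>_closed by (simp add: FD_def is_lift_def)
qed

lemma subgroup_Deck_FAut: "subgroup (Deck VL EL \<phi>) FAut_group"
  using group.subgroup_incl[OF group_AutoGroup_AL subgroup_Deck subgroup_FAut] Deck_subset_FD FD_subset_FAut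
  by blast

lemma Deck_Int_IA: "Deck VL EL \<phi> \<inter> IA AL \<subseteq> {\<one>\<^bsub>AutoGroup AL\<^esub>}"
proof
  fix D assume D: "D \<in> Deck VL EL \<phi> \<inter> IA AL"
  then obtain \<mu> where \<mu>: "\<mu> \<in> deck_graph VL EL \<phi>" "D = raag_hom VL EL VL EL \<mu>" by (auto simp: Deck_def)
  have "\<mu> w = w" if w: "w \<in> VL" for w
  proof -
    have \<mu>w: "\<mu> w \<in> VL" using \<mu>(1) w by (auto simp: deck_graph_def graph_aut_def bij_betw_def)
    have "exp_vec (D (gen w)) = exp_vec (gen w)" using D gen_carrier[OF w] by (simp add: IA_raag_iff)
    moreover have "D (gen w) = gen (\<mu> w)" using \<mu> w by (simp add: raag_hom_class deck_simplicial)
    ultimately have "(\<lambda>z. if z = \<mu> w then 1 else 0 :: int) = (\<lambda>z. if z = w then 1 else 0)"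
      using \<mu>w w by (simp add: exp_vec_gen)
    then show ?thesis by (metis zero_neq_one)
  qed
  then show "D \<in> {\<one>\<^bsub>AutoGroup AL\<^esub>}"
    using \<mu>(2) by (simp add: raag_hom_id_on group.AutoGroup_one[OF group_AL])
qed


lemma generator_images_inverse:
  assumes S: "S \<in> auto AL" and T: "T \<in> auto AL"
    and \<sigma>: "\<And>u. u \<in> VL \<Longrightarrow> exp_vec (S (gen u)) = (\<lambda>z. if z = \<sigma> u then 1 else 0)"
    and \<tau>: "\<And>u. u \<in> VL \<Longrightarrow> \<tau> u \<in> VL \<and> exp_vec (T (gen u)) = (\<lambda>z. if z = \<tau> u then 1 else 0)"
    and w: "w \<in> VL" and ST: "S (T (gen w)) = gen w"
  shows "\<sigma> (\<tau> w) = w"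
proof -
  have Tw: "T (gen w) \<in> carrier AL" by (rule group.auto_closed[OF group_AL T gen_carrier[OF w]])
  have "exp_vec (gen w) (\<sigma> (\<tau> w)) = (\<Sum>u\<in>{u\<in>VL. \<sigma> u = \<sigma> (\<tau> w)}. exp_vec (T (gen w)) u)"
    using exp_vec_aut_apply[OF finite_VL S \<sigma> Tw] ST by simp
  also have "\<dots> = 1" using \<tau>[OF w] finite_VL by (simp add: sum.delta')
  finally show ?thesis using exp_vec_gen[OF w] by (simp split: if_splits)
qed

lemma IA_lift_deck:
  assumes F: "F \<in> FAut VL EL VG EG \<phi>" and f: "lifted_aut VL EL VG EG \<phi> F \<in> IA AG"
  obtains \<mu> where "\<mu> \<in> deck_graph VL EL \<phi>"
    and "\<And>P w. P \<in> carrier AL \<Longrightarrow> exp_vec (F P) w = (\<Sum>u\<in>{u\<in>VL. \<mu> u = w}. exp_vec P u)"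
proof -
  let ?F' = "inv\<^bsub>AutoGroup AL\<^esub> F"
  have Fa: "F \<in> auto AL" using F by (simp add: FAut_def)
  have F': "?F' \<in> FAut VL EL VG EG \<phi>" using subgroup.m_inv_closed[OF subgroup_FAut F] .
  have F'a: "?F' \<in> auto AL" using F' by (simp add: FAut_def)
  have f': "lifted_aut VL EL VG EG \<phi> ?F' \<in> IA AG"
    using lifted_aut_inv[OF F] subgroup.m_inv_closed[OF normal_imp_subgroup[OF group.IA_normal[OF group_AG]] f]
    by simp
  obtain \<mu> where \<mu>: "\<And>u. u \<in> VL \<Longrightarrow> \<mu> u \<in> VL \<and> \<phi> (\<mu> u) = \<phi> u"
    "\<And>u. u \<in> VL \<Longrightarrow> exp_vec (F (gen u)) = (\<lambda>z. if z = \<mu> u then 1 else 0)"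
    "\<And>u v. EL u v \<Longrightarrow> EL (\<mu> u) (\<mu> v)"
    using IA_lift_permutes_generators[OF F f] by blast
  obtain \<nu> where \<nu>: "\<And>u. u \<in> VL \<Longrightarrow> \<nu> u \<in> VL \<and> \<phi> (\<nu> u) = \<phi> u"
    "\<And>u. u \<in> VL \<Longrightarrow> exp_vec (?F' (gen u)) = (\<lambda>z. if z = \<nu> u then 1 else 0)"
    "\<And>u v. EL u v \<Longrightarrow> EL (\<nu> u) (\<nu> v)"
    using IA_lift_permutes_generators[OF F' f'] by blast
  have \<mu>\<nu>: "\<mu> (\<nu> w) = w" if "w \<in> VL" for w
    using generator_images_inverse[OF Fa F'a \<mu>(2) _ that] \<nu>(1,2) that
      group.AutoGroup_inv_apply_right[OF group_AL Fa gen_carrier[OF that]] by blast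
  have \<nu>\<mu>: "\<nu> (\<mu> w) = w" if "w \<in> VL" for w
    using generator_images_inverse[OF F'a Fa \<nu>(2) _ that] \<mu>(1,2) that
      group.AutoGroup_inv_apply_left[OF group_AL Fa gen_carrier[OF that]] by blast
  show ?thesis
  proof (rule that)
    have "bij_betw \<mu> VL VL"
      using \<mu>(1) \<nu>(1) \<mu>\<nu> \<nu>\<mu> by (intro bij_betw_byWitness[where f'=\<nu>]) auto
    moreover have "EL (\<mu> u) (\<mu> v) \<longleftrightarrow> EL u v" if "u \<in> VL" "v \<in> VL" for u v
      using \<mu>(3) \<nu>(3)[of "\<mu> u" "\<mu> v"] \<nu>\<mu> that by auto
    ultimately show "\<mu> \<in> deck_graph VL EL \<phi>" using \<mu>(1) by (simp add: deck_graph_def graph_aut_def)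
  next
    fix P w assume "P \<in> carrier AL"
    then show "exp_vec (F P) w = (\<Sum>u\<in>{u\<in>VL. \<mu> u = w}. exp_vec P u)"
      using exp_vec_aut_apply[OF finite_VL Fa \<mu>(2)] by blast
  qed
qed

lemma IA_lift_in_Deck_coset:
  assumes F: "F \<in> FAut VL EL VG EG \<phi>" and f: "lifted_aut VL EL VG EG \<phi> F \<in> IA AG"
  shows "\<exists>D\<in>Deck VL EL \<phi>. F \<in> (FAut VL EL VG EG \<phi> \<inter> IA AL) #>\<^bsub>FAut_group\<^esub> D"
proof -
  obtain \<mu> where \<mu>: "\<mu> \<in> deck_graph VL EL \<phi>"
    and exp_F: "\<And>P w. P \<in> carrier AL \<Longrightarrow> exp_vec (F P) w = (\<Sum>u\<in>{u\<in>VL. \<mu> u = w}. exp_vec P u)"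
    using IA_lift_deck[OF F f] by blast
  define D where "D = raag_hom VL EL VL EL \<mu>"
  have DDeck: "D \<in> Deck VL EL \<phi>" using \<mu> by (auto simp: D_def Deck_def)
  have Da: "D \<in> auto AL" using deck_auto[OF \<mu>] by (simp add: D_def)
  have DF: "D \<in> FAut VL EL VG EG \<phi>" using DDeck Deck_subset_FD FD_subset_FAut by blast
  have Fa: "F \<in> auto AL" using F by (simp add: FAut_def)
  let ?N = "F \<otimes>\<^bsub>AutoGroup AL\<^esub> inv\<^bsub>AutoGroup AL\<^esub> D"
  have Dia: "inv\<^bsub>AutoGroup AL\<^esub> D \<in> auto AL" by (rule group.AutoGroup_inv_closed[OF group_AL Da])
  have "exp_vec (?N z) = exp_vec z" if z: "z \<in> carrier AL" for z
  proof -
    let ?Q = "(inv\<^bsub>AutoGroup AL\<^esub> D) z"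
    have Q: "?Q \<in> carrier AL" by (rule group.auto_closed[OF group_AL Dia z])
    have "exp_vec (F ?Q) w = exp_vec (D ?Q) w" for w
      using exp_F[OF Q] exp_vec_raag_hom[OF finite_VL deck_simplicial[OF \<mu>] Q] by (simp add: D_def)
    then show ?thesis
      using group.AutoGroup_mult_apply[OF group_AL Fa Dia z] group.AutoGroup_inv_apply_right[OF group_AL Da z]
      by auto
  qed
  then have "?N \<in> IA AL" using group.AutoGroup_m_closed[OF group_AL Fa Dia] by (simp add: IA_raag_iff)
  moreover have "?N \<in> FAut VL EL VG EG \<phi>"
    using subgroup.m_closed[OF subgroup_FAut F subgroup.m_inv_closed[OF subgroup_FAut DF]] .
  moreover have "F = ?N \<otimes>\<^bsub>AutoGroup AL\<^esub> D"
    using group.inv_solve_right'[OF group_AutoGroup_AL, of ?N F D] Fa Da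
      group.AutoGroup_m_closed[OF group_AL Fa Dia] by simp
  ultimately show ?thesis using DDeck by (auto simp: r_coset_def)
qed

end

theorem corollary7p4:
  fixes VL :: "'w set" and EL :: "'w \<Rightarrow> 'w \<Rightarrow> bool"
    and VG :: "'v set" and EG :: "'v \<Rightarrow> 'v \<Rightarrow> bool"
    and \<phi> :: "'w \<Rightarrow> 'v"
  assumes "simple_graph VL EL" and "simple_graph VG EG"
    and "no_isolated_vertices VL EL" and "no_isolated_vertices VG EG"
    and "regular_covering VL EL VG EG \<phi>"
  defines "AL \<equiv> raag VL EL" and "AG \<equiv> raag VG EG"
  defines "FDG \<equiv> (AutoGroup AL)\<lparr>carrier := FD VL EL VG EG \<phi>\<rparr>"
    and "FAutG \<equiv> (AutoGroup AL)\<lparr>carrier := FAut VL EL VG EG \<phi>\<rparr>"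
    and "LAutG \<equiv> (AutoGroup AG)\<lparr>carrier := LAut VL EL VG EG \<phi>\<rparr>"
    and "DeckG \<equiv> (AutoGroup AL)\<lparr>carrier := Deck VL EL \<phi>\<rparr>"
  defines "p \<equiv> lifted_aut VL EL VG EG \<phi>"
    and "NL \<equiv> FAut VL EL VG EG \<phi> \<inter> IA AL"
    and "NG \<equiv> LAut VL EL VG EG \<phi> \<inter> IA AG"
  defines "i2 \<equiv> (\<lambda>\<mu>. NL #>\<^bsub>FAutG\<^esub> \<mu>)"
    and "q \<equiv> (\<lambda>C. NG #>\<^bsub>LAutG\<^esub> p (SOME F. F \<in> C))"
  shows "group FDG \<and> group FAutG \<and> group LAutG \<and>
         (\<lambda>F. F) \<in> mon FDG FAutG \<and>
         kernel FAutG LAutG p = (\<lambda>F. F) ` FD VL EL VG EG \<phi> \<and>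
         p \<in> epi FAutG LAutG \<and>
         group DeckG \<and> NL \<lhd> FAutG \<and> NG \<lhd> LAutG \<and>
         i2 \<in> mon DeckG (FAutG Mod NL) \<and>
         kernel (FAutG Mod NL) (LAutG Mod NG) q = i2 ` Deck VL EL \<phi> \<and>
         q \<in> epi (FAutG Mod NL) (LAutG Mod NG)"
proof -
  interpret regular_cover VL EL VG EG \<phi> using assms(1,2,3,5) by (rule regular_cover.intro)
  interpret p: group_hom FAut_group LAut_group "lifted_aut VL EL VG EG \<phi>"
    by (rule group_hom_lifted_aut)
  note normal = normal_FAut_IA normal_LAut_IA
  have Deck_Int: "Deck VL EL \<phi> \<inter> (FAut VL EL VG EG \<phi> \<inter> IA (raag VL EL)) \<subseteq> {\<one>\<^bsub>FAut_group\<^esub>}"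
    using Deck_Int_IA by auto
  have onto: "lifted_aut VL EL VG EG \<phi> ` carrier FAut_group = carrier LAut_group"
    using lifted_aut_onto by simp
  have Deck_kernel: "Deck VL EL \<phi> \<subseteq> kernel FAut_group LAut_group (lifted_aut VL EL VG EG \<phi>)"
    using Deck_subset_FD by (simp add: kernel_lifted_aut)
  have Deck_coset: "\<exists>D\<in>Deck VL EL \<phi>. F \<in> (FAut VL EL VG EG \<phi> \<inter> IA (raag VL EL)) #>\<^bsub>FAut_group\<^esub> D"
    if "F \<in> carrier FAut_group" "lifted_aut VL EL VG EG \<phi> F \<in> LAut VL EL VG EG \<phi> \<inter> IA (raag VG EG)" for F
    using IA_lift_in_Deck_coset that by simp
  show ?thesis
    unfolding AL_def AG_def FDG_def FAutG_def LAutG_def DeckG_def p_def NL_def NG_def i2_def q_def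
    using group_FAut_group group_LAut_group p.G.subgroup_imp_group[OF subgroup_FD_FAut]
      p.G.subgroup_imp_group[OF subgroup_Deck_FAut] mon_FD_FAut kernel_lifted_aut lifted_aut_epi normal
      normal.rcos_mon_of_Int_trivial[OF normal_FAut_IA subgroup_Deck_FAut Deck_Int]
      p.FactGroup_induced_kernel[OF normal lifted_aut_image_IA subgroup_Deck_FAut Deck_kernel Deck_coset]
      p.FactGroup_induced_epi[OF onto normal lifted_aut_image_IA]
    by simp
qed

end
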